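(* Let $N\ge1$, $\underline s=(s_1,\dots,s_N)\in\mathbb{Z}^N$, $\underline m=(m_1,\dots,m_N)\in\mathbb{N}^N$ with $m_1=0$, $\underline j=(j_1,\dots,j_N)\in\mathbb{N}^N$, and complex $\underline z=(z_1,\dots,z_N)$ with $|z_1|>1$, $|z_i|\ge1$ for $i\ge2$. (i) One has $$\mathrm{B}_N\!\left[\begin{smallmatrix}\underline s\\ \underline m\\ \underline j\end{smallmatrix}\Big|\underline z\right]=(z_1^{j_1}\cdots z_N^{j_N})\,\mathrm{La}_{s_1,\dots,s_N}(1/z_1,\dots,1/z_N)-\sum_{p=1}^N(z_p^{j_p}\cdots z_N^{j_N})\,Q_{N,p}(j_p;z_p,\dots,z_N)\,\mathrm{B}_{p-1}\!\left[\begin{smallmatrix}s_1,\dots,s_{p-1}\\ m_1,\dots,m_{p-1}\\ j_1,\dots,j_{p-1}\end{smallmatrix}\Big|z_1,\dots,z_{p-1}\right]+\sum_{p=2}^N\varepsilon_p\,(z_p^{j_p}\cdots z_N^{j_N})\sum_{k=t_p+1}^{T_p}z_p^{-k}R_{N,p}(k).$$ (ii) For every $p$ with $2\le p\le N$ and every integer $K\ge0$, $R_{N,p}(K)$ is a term of depth $\le N-1$, of weight $\le\sum_{i=1}^N\max(s_i,0)$.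
   Context: For $r\ge1$, $\underline s\in\mathbb{Z}^r$, $\underline m\in\mathbb{N}^r$ with $m_1=0$, $\underline j\in\mathbb{N}^r$ and complex $w_1,\dots,w_r$ with $|w_1|>1$, $|w_i|\ge1$, the (shifted-modulated) brick is $\mathrm{B}_r\!\left[\begin{smallmatrix}\underline s\\ \underline m\\ \underline j\end{smallmatrix}\Big|\underline w\right]=\sum\frac{w_1^{-k_1}\cdots w_r^{-k_r}}{(k_1+j_1)^{s_1}\cdots(k_r+j_r)^{s_r}}$, the sum being over integers with $k_1\ge1$ and $1\le k_i\le k_{i-1}+m_i$ for $2\le i\le r$; $\mathrm{B}_0=1$. Its depth is $r$ and its weight is $\sum_i\max(s_i,0)$. $\mathrm{La}_{s_1,\dots,s_N}(w_1,\dots,w_N)=\sum_{k_1\ge\cdots\ge k_N\ge1}\frac{w_1^{k_1}\cdots w_N^{k_N}}{k_1^{s_1}\cdots k_N^{s_N}}$. For $1\le p\le N$ and $K\ge0$, $Q_{N,p}(K;z_p,\dots,z_N)=\sum_{K\ge k_p\ge\cdots\ge k_N\ge1}\prod_{i=p}^Nz_i^{-k_i}k_i^{-s_i}$ (equal to $0$ if $K=0$), and $Q_{N,N+1}=1$. For integers $a,b$: $\varepsilon_{a,b}=1$ if $a<b$, $-1$ if $a>b$, $0$ if $a=b$; for $2\le p\le N$: $\varepsilon_p=\varepsilon_{j_{p-1},j_p+m_p}$, $t_p=\min(j_{p-1},j_p+m_p)$, $T_p=\max(j_{p-1},j_p+m_p)$. For $2\le p\le N$ and $K\ge0$, $R_{N,p}(K)=\sum\frac{z_1^{-k_1}\cdots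 z_{p-2}^{-k_{p-2}}(z_{p-1}z_p)^{-k_{p-1}}}{\big(\prod_{i=1}^{p-1}(k_i+j_i)^{s_i}\big)(k_{p-1}+K)^{s_p}}\,Q_{N,p+1}(k_{p-1}+K;z_{p+1},\dots,z_N)$, summed over $k_1\ge1$ and $1\le k_i\le k_{i-1}+m_i$ ($2\le i\le p-1$) (for $p=2$ the factor $z_1^{-k_1}\cdots z_{p-2}^{-k_{p-2}}$ is $1$). A term of depth $\le N-1$ is a finite linear combination, with coefficients in $\mathbb{Q}[z_1^{\pm1},\dots,z_N^{\pm1}]$, of bricks $\mathrm{B}_r[\cdots|w_1,\dots,w_r]$ with $0\le r\le N-1$ (arbitrary integer exponents, nonnegative modulations with first modulation $0$, nonnegative shifts) where each $w_i$ is a product of some of the $z_1,\dots,z_N$; its weight is the maximum of the weights of the bricks in it. *)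

theory Defs
  imports "HOL-Analysis.Analysis"
begin

text \<open>All tuples are functions on nat, only indices 1..r (resp. p..N) matter.\<close>

definition brick_idx :: "nat \<Rightarrow> (nat \<Rightarrow> nat) \<Rightarrow> (nat \<Rightarrow> nat) set" where
  "brick_idx r m = {k. (\<forall>i\<in>{1..r}. 1 \<le> k i) \<and> (\<forall>i\<in>{2..r}. k i \<le> k (i - 1) + m i)
                       \<and> (\<forall>i. i \<notin> {1..r} \<longrightarrow> k i = 0)}"

definition Brick :: "nat \<Rightarrow> (nat \<Rightarrow> int) \<Rightarrow> (nat \<Rightarrow> nat) \<Rightarrow> (nat \<Rightarrow> nat) \<Rightarrow> (nat \<Rightarrow> complex) \<Rightarrow> complex" where
  "Brick r s m j w =
     (\<Sum>\<^sub>\<infinity>k\<in>brick_idx r m.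
        \<Prod>i\<in>{1..r}. inverse (w i ^ k i * (of_nat (k i + j i)) powi (s i)))"

definition La :: "nat \<Rightarrow> (nat \<Rightarrow> int) \<Rightarrow> (nat \<Rightarrow> complex) \<Rightarrow> complex" where
  "La N s w =
     (\<Sum>\<^sub>\<infinity>k\<in>{k. (\<forall>i\<in>{1..N}. 1 \<le> k i) \<and> (\<forall>i\<in>{1..<N}. k (i + 1) \<le> k i)
                 \<and> (\<forall>i. i \<notin> {1..N} \<longrightarrow> k i = 0)}.
        \<Prod>i\<in>{1..N}. w i ^ k i / (of_nat (k i)) powi (s i))"

text \<open>Q_{N,p}(K; z_p..z_N); for p = N+1 this is the empty product 1.\<close>
definition Qf :: "nat \<Rightarrow> nat \<Rightarrow> (nat \<Rightarrow> int) \<Rightarrow> nat \<Rightarrow> (nat \<Rightarrow> complex) \<Rightarrow> complex" where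
  "Qf N p s K z =
     (\<Sum>k\<in>{k. (p \<le> N \<longrightarrow> k p \<le> K) \<and> (\<forall>i\<in>{p..N}. 1 \<le> k i) \<and> (\<forall>i\<in>{p..<N}. k (i + 1) \<le> k i)
              \<and> (\<forall>i. i \<notin> {p..N} \<longrightarrow> k i = 0)}.
        \<Prod>i\<in>{p..N}. inverse (z i ^ k i * (of_nat (k i)) powi (s i)))"

definition Rf :: "nat \<Rightarrow> nat \<Rightarrow> (nat \<Rightarrow> int) \<Rightarrow> (nat \<Rightarrow> nat) \<Rightarrow> (nat \<Rightarrow> nat)
                   \<Rightarrow> (nat \<Rightarrow> complex) \<Rightarrow> nat \<Rightarrow> complex" where
  "Rf N p s m j z K =
     (\<Sum>\<^sub>\<infinity>k\<in>brick_idx (p - 1) m.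
        (\<Prod>i\<in>{1..p-2}. inverse (z i ^ k i))
        * inverse ((z (p - 1) * z p) ^ k (p - 1))
        * inverse ((\<Prod>i\<in>{1..p-1}. (of_nat (k i + j i)) powi (s i))
                   * (of_nat (k (p - 1) + K)) powi (s p))
        * Qf N (p + 1) s (k (p - 1) + K) z)"

definition eps :: "int \<Rightarrow> int \<Rightarrow> int" where
  "eps a b = (if a < b then 1 else if a > b then -1 else 0)"

definition zdom :: "nat \<Rightarrow> (nat \<Rightarrow> complex) set" where
  "zdom N = {z. cmod (z 1) > 1 \<and> (\<forall>i\<in>{2..N}. cmod (z i) \<ge> 1)}"

text \<open>Laurent polynomials in Q[z_1^{+-1},..,z_N^{+-1}], represented as finite lists of
  (rational coefficient, integer exponent vector), and their evaluation.\<close>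
type_synonym laurent = "(rat \<times> (nat \<Rightarrow> int)) list"

definition lp_eval :: "nat \<Rightarrow> laurent \<Rightarrow> (nat \<Rightarrow> complex) \<Rightarrow> complex" where
  "lp_eval N c z = (\<Sum>(a, e)\<leftarrow>c. of_rat a * (\<Prod>i\<in>{1..N}. z i powi e i))"

text \<open>A brick descriptor: depth r, exponents, modulations, shifts, and for each
  position i the set S_i of indices with w_i = prod_{l in S_i} z_l.\<close>
type_synonym brick_desc = "nat \<times> (nat \<Rightarrow> int) \<times> (nat \<Rightarrow> nat) \<times> (nat \<Rightarrow> nat) \<times> (nat \<Rightarrow> nat set)"

type_synonym bterm = "(laurent \<times> brick_desc) list"

definition bd_vars :: "brick_desc \<Rightarrow> (nat \<Rightarrow> complex) \<Rightarrow> (nat \<Rightarrow> complex)" where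
  "bd_vars b z = (case b of (r, s, m, j, S) \<Rightarrow> (\<lambda>i. \<Prod>l\<in>S i. z l))"

definition bd_weight :: "brick_desc \<Rightarrow> int" where
  "bd_weight b = (case b of (r, s, m, j, S) \<Rightarrow> (\<Sum>i\<in>{1..r}. max (s i) 0))"

definition bd_ok :: "nat \<Rightarrow> brick_desc \<Rightarrow> bool" where
  "bd_ok N b = (case b of (r, s, m, j, S) \<Rightarrow>
      r \<le> N - 1 \<and> (1 \<le> r \<longrightarrow> m 1 = 0) \<and> (\<forall>i\<in>{1..r}. S i \<subseteq> {1..N}))"

definition bd_defined :: "brick_desc \<Rightarrow> (nat \<Rightarrow> complex) \<Rightarrow> bool" where
  "bd_defined b z = (case b of (r, s, m, j, S) \<Rightarrow>
      (1 \<le> r \<longrightarrow> cmod (bd_vars b z 1) > 1) \<and> (\<forall>i\<in>{1..r}. cmod (bd_vars b z i) \<ge> 1))"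

definition bd_eval :: "brick_desc \<Rightarrow> (nat \<Rightarrow> complex) \<Rightarrow> complex" where
  "bd_eval b z = (case b of (r, s, m, j, S) \<Rightarrow> Brick r s m j (bd_vars b z))"

definition term_eval :: "nat \<Rightarrow> bterm \<Rightarrow> (nat \<Rightarrow> complex) \<Rightarrow> complex" where
  "term_eval N T z = (\<Sum>(c, b)\<leftarrow>T. lp_eval N c z * bd_eval b z)"

definition is_term_repr :: "nat \<Rightarrow> int \<Rightarrow> bterm \<Rightarrow> ((nat \<Rightarrow> complex) \<Rightarrow> complex) \<Rightarrow> bool" where
  "is_term_repr N W T F =
     ((\<forall>(c, b)\<in>set T. bd_ok N b \<and> bd_weight b \<le> W) \<and>
      (\<forall>z\<in>zdom N. (\<forall>(c, b)\<in>set T. bd_defined b z) \<and> F z = term_eval N T z))"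

end

(*
  Both sides of the expansion are sums of one summand,
  g(n) = prod_i z_i^(-n_i) n_i^(-s_i), over subsets of one set of tuples n: La(1/z) sums over the
  descending tuples n_1 >= ... >= n_N, and z^(-j) B_N over the tuples whose coordinates, shifted
  down by j, form a brick index. The hybrid sums H_p, in which the first p coordinates satisfy the
  shifted brick constraints and the remaining ones descend, interpolate between H_0 = La(1/z) and
  H_N = z^(-j) B_N. Going from H_(p-1) to H_p only changes the constraint between n_(p-1) and n_p:
  the tuples with n_p <= j_p factor as B_(p-1) Q_(N,p)(j_p), and the two constraints differ by a
  band of width |j_(p-1) - j_p - m_p| in n_p - n_(p-1), whose slices are the R_(N,p)(k).
  Summing over p telescopes to the expansion.

  In R_(N,p)(K) the index k_p is k_(p-1) + K, so these two positions merge into one with variable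
  z_(p-1) z_p. A partial fraction expansion of (k_(p-1) + j_(p-1))^(-s_(p-1)) (k_(p-1) + K)^(-s_p)
  in k_(p-1) then writes R_(N,p)(K) as a rational combination of bricks of depth N - 1, and no
  exponent of this expansion exceeds the sum of the positive parts of s_(p-1) and s_p.
*)
theory Submission
  imports Defs "HOL-Real_Asymp.Real_Asymp"
begin

lemma (in comm_monoid_set) atLeastAtMost_split_at:
  fixes p N :: nat
  assumes "1 \<le> p" "p \<le> Suc N"
  shows "F g {1..N} = F g {1..p - 1} \<^bold>* F g {p..N}"
proof -
  have "{1..N} = {1..p - 1} \<union> {p..N}" using assms by auto
  then show ?thesis by (simp add: union_disjoint)
qed

lemma (in comm_monoid_set) atLeastAtMost_last:
  fixes p :: nat
  assumes "2 \<le> p"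
  shows "F g {1..p - 1} = F g {1..p - 2} \<^bold>* g (p - 1)"
proof -
  obtain k where "p = Suc (Suc k)" using assms by (metis add_2_eq_Suc le_Suc_ex)
  then show ?thesis by (simp add: atLeastAtMostSuc_conv commute)
qed

lemma infsum_Sigma_reindex:
  fixes F f h :: "_ \<Rightarrow> complex"
  assumes bij: "bij_betw \<phi> (Sigma A B) C"
    and fin: "\<And>a. a \<in> A \<Longrightarrow> finite (B a)"
    and eq: "\<And>a b. a \<in> A \<Longrightarrow> b \<in> B a \<Longrightarrow> F (\<phi> (a, b)) = f a * h b"
    and summable: "F summable_on C"
  shows "(\<Sum>\<^sub>\<infinity>a\<in>A. f a * sum h (B a)) = infsum F C"
proof -
  have eq': "F (\<phi> x) = (case x of (a, b) \<Rightarrow> f a * h b)" if "x \<in> Sigma A B" for x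
    using that eq by auto
  have "(\<lambda>x. F (\<phi> x)) summable_on Sigma A B"
    using summable summable_on_reindex_bij_betw[OF bij] by blast
  then have summable': "(\<lambda>(a, b). f a * h b) summable_on Sigma A B"
    by (rule summable_on_cong[THEN iffD1, rotated]) (simp add: eq')
  have "infsum F C = (\<Sum>\<^sub>\<infinity>x\<in>Sigma A B. F (\<phi> x))"
    by (rule infsum_reindex_bij_betw[OF bij, symmetric])
  also have "\<dots> = (\<Sum>\<^sub>\<infinity>(a, b)\<in>Sigma A B. f a * h b)"
    by (rule infsum_cong) (simp add: eq')
  also have "\<dots> = (\<Sum>\<^sub>\<infinity>a\<in>A. \<Sum>\<^sub>\<infinity>b\<in>B a. f a * h b)"
    using infsum_Sigma_banach[OF summable'] by simp
  also have "\<dots> = (\<Sum>\<^sub>\<infinity>a\<in>A. f a * sum h (B a))"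
    by (rule infsum_cong) (simp add: fin sum_distrib_left)
  finally show ?thesis ..
qed

lemma infsum_sum_list:
  fixes f :: "'b \<Rightarrow> 'a \<Rightarrow> complex"
  assumes "\<And>x. x \<in> set L \<Longrightarrow> f x summable_on A"
  shows "(\<lambda>k. \<Sum>x\<leftarrow>L. f x k) summable_on A \<and> (\<Sum>\<^sub>\<infinity>k\<in>A. \<Sum>x\<leftarrow>L. f x k) = (\<Sum>x\<leftarrow>L. infsum (f x) A)"
  using assms by (induction L) (auto simp: infsum_add summable_on_add)

section \<open>Summability of bricks\<close>

lemma summable_poly_times_geometric:
  fixes q E :: real
  assumes "0 < q" "q < 1"
  shows "summable (\<lambda>n::nat. (real n + E) ^ B * q ^ n)"
proof -
  define r where "r = sqrt q"
  have r: "0 < r" "r < 1" "r * r = q" using assms by (auto simp: r_def)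
  have "(\<lambda>n::nat. (real n + E) ^ B * r ^ n) \<longlonglongrightarrow> 0" using r by real_asymp
  then have "eventually (\<lambda>n. norm ((real n + E) ^ B * r ^ n) < 1) sequentially"
    using order_tendstoD(2)[OF tendsto_norm_zero zero_less_one] by blast
  then have "eventually (\<lambda>n. norm ((real n + E) ^ B * q ^ n) \<le> r ^ n) sequentially"
  proof (rule eventually_mono)
    fix n assume small: "norm ((real n + E) ^ B * r ^ n) < 1"
    have "norm ((real n + E) ^ B * q ^ n) = norm ((real n + E) ^ B * r ^ n) * r ^ n"
      using r by (simp add: abs_mult power_mult_distrib flip: r(3))
    also have "\<dots> \<le> r ^ n" using small r by (simp add: mult_left_le_one_le)
    finally show "norm ((real n + E) ^ B * q ^ n) \<le> r ^ n" .
  qed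
  then show ?thesis
    by (rule summable_comparison_test_ev) (use r in \<open>auto intro!: summable_geometric\<close>)
qed

lemma finite_card_bounded_functions:
  fixes r a :: nat
  defines "Box \<equiv> {k::nat \<Rightarrow> nat. (\<forall>i. i \<notin> {1..r} \<longrightarrow> k i = 0) \<and> (\<forall>i\<in>{1..r}. k i \<le> a)}"
  shows "finite Box \<and> card Box \<le> (a + 1) ^ r"
proof -
  let ?ext = "\<lambda>f i. if i \<in> {1..r} then f i else 0 :: nat"
  let ?Pi = "PiE {1..r} (\<lambda>_. {0..a})"
  have sub: "Box \<subseteq> ?ext ` ?Pi"
  proof
    fix k assume k: "k \<in> Box"
    then have "k = ?ext (restrict k {1..r})" by (auto simp: Box_def)
    moreover have "restrict k {1..r} \<in> ?Pi" using k by (auto simp: Box_def)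
    ultimately show "k \<in> ?ext ` ?Pi" by blast
  qed
  have "card Box \<le> card (?ext ` ?Pi)" by (rule card_mono[OF _ sub]) (simp add: finite_PiE)
  also have "\<dots> \<le> card ?Pi" by (rule card_image_le) (simp add: finite_PiE)
  finally show ?thesis
    using finite_subset[OF sub] by (simp add: card_PiE finite_PiE)
qed

lemma brick_idx_le_first:
  assumes k: "k \<in> brick_idx r m" and i: "i \<in> {1..r}"
  shows "k i \<le> k 1 + (\<Sum>l\<in>{1..r}. m l)"
proof -
  have step: "\<forall>i\<in>{2..r}. k i \<le> k (i - 1) + m i" using k by (simp add: brick_idx_def)
  have "k i \<le> k 1 + (\<Sum>l\<in>{2..i}. m l)" using i
  proof (induction i)
    case (Suc i)
    show ?case
    proof (cases "i = 0")
      case False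
      with Suc.prems have "Suc i \<in> {2..r}" by auto
      then have "k (Suc i) \<le> k i + m (Suc i)" using step by fastforce
      with Suc False show ?thesis by (simp add: sum.cl_ivl_Suc)
    qed simp
  qed simp
  also have "(\<Sum>l\<in>{2..i}. m l) \<le> (\<Sum>l\<in>{1..r}. m l)" using i by (intro sum_mono2) auto
  finally show ?thesis by simp
qed

lemma card_brick_idx_fiber_le:
  assumes S: "S \<subseteq> brick_idx r m"
  shows "card {k \<in> S. k 1 = a} \<le> (a + (\<Sum>l\<in>{1..r}. m l) + 1) ^ r"
proof -
  define M where "M = (\<Sum>l\<in>{1..r}. m l)"
  define Box where "Box = {k::nat \<Rightarrow> nat. (\<forall>i. i \<notin> {1..r} \<longrightarrow> k i = 0) \<and> (\<forall>i\<in>{1..r}. k i \<le> a + M)}"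
  have "{k \<in> S. k 1 = a} \<subseteq> Box"
  proof
    fix k assume "k \<in> {k \<in> S. k 1 = a}"
    then have k: "k \<in> brick_idx r m" "k 1 = a" using S by auto
    then have "\<forall>i\<in>{1..r}. k i \<le> a + M" using brick_idx_le_first[OF k(1)] by (simp add: M_def)
    moreover have "\<forall>i. i \<notin> {1..r} \<longrightarrow> k i = 0" using k(1) by (simp add: brick_idx_def)
    ultimately show "k \<in> Box" by (simp add: Box_def)
  qed
  moreover have "finite Box \<and> card Box \<le> (a + M + 1) ^ r"
    unfolding Box_def by (rule finite_card_bounded_functions)
  ultimately show ?thesis by (metis M_def card_mono order_trans)
qed

text \<open>There are only polynomially many brick indices with a given first coordinate, so
  geometric decay in the first coordinate alone gives absolute summability.\<close>

lemma summable_on_brick_idx: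
  fixes F :: "(nat \<Rightarrow> nat) \<Rightarrow> complex" and q E :: real
  assumes q: "0 < q" "q < 1" and E: "0 \<le> E"
    and bound: "\<And>k. k \<in> brick_idx r m \<Longrightarrow> norm (F k) \<le> (real (k 1) + E) ^ B * q ^ k 1"
  shows "F summable_on brick_idx r m"
proof -
  define M where "M = (\<Sum>l\<in>{1..r}. m l)"
  define H where "H a = (real a + (real M + E + 1)) ^ (r + B) * q ^ a" for a :: nat
  have fiber_bound: "real (card {k \<in> S. k 1 = a}) * ((real a + E) ^ B * q ^ a) \<le> H a"
    if "S \<subseteq> brick_idx r m" for S a
  proof -
    have "real (card {k \<in> S. k 1 = a}) \<le> real ((a + M + 1) ^ r)"
      using card_brick_idx_fiber_le[OF that, of a] by (simp only: of_nat_le_iff M_def)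
    also have "\<dots> \<le> (real a + (real M + E + 1)) ^ r" using E by (simp add: power_mono)
    finally have "real (card {k \<in> S. k 1 = a}) * ((real a + E) ^ B * q ^ a)
        \<le> (real a + (real M + E + 1)) ^ r * ((real a + (real M + E + 1)) ^ B * q ^ a)"
      using q E by (intro mult_mono mult_right_mono power_mono) auto
    then show ?thesis by (simp add: H_def power_add mult.assoc)
  qed
  have "(\<lambda>k. norm (F k)) summable_on brick_idx r m"
  proof (rule nonneg_bdd_above_summable_on)
    show "bdd_above (sum (\<lambda>k. norm (F k)) ` {S. S \<subseteq> brick_idx r m \<and> finite S})"
    proof (rule bdd_aboveI2)
      fix S assume S: "S \<in> {S. S \<subseteq> brick_idx r m \<and> finite S}"
      have "(\<Sum>k\<in>S. norm (F k)) \<le> (\<Sum>k\<in>S. (real (k 1) + E) ^ B * q ^ k 1)"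
        using S bound by (intro sum_mono) auto
      also have "\<dots> = (\<Sum>a\<in>(\<lambda>k. k 1) ` S. \<Sum>k\<in>{k\<in>S. k 1 = a}. (real (k 1) + E) ^ B * q ^ k 1)"
        using S by (intro sum.image_gen) blast
      also have "\<dots> = (\<Sum>a\<in>(\<lambda>k. k 1) ` S. real (card {k\<in>S. k 1 = a}) * ((real a + E) ^ B * q ^ a))"
        by (intro sum.cong) auto
      also have "\<dots> \<le> (\<Sum>a\<in>(\<lambda>k. k 1) ` S. H a)"
        using S fiber_bound by (intro sum_mono) auto
      also have "\<dots> \<le> suminf H"
        unfolding H_def using S q E
        by (intro sum_le_suminf summable_poly_times_geometric) auto
      finally show "(\<Sum>k\<in>S. norm (F k)) \<le> suminf H" .
    qed
  qed auto
  then show ?thesis by (rule abs_summable_summable)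
qed

lemma norm_inverse_brick_factor_le:
  fixes w :: complex
  assumes x: "1 \<le> x" and w: "1 \<le> cmod w" and a: "real a \<le> D" and s: "nat \<bar>s\<bar> \<le> B"
  shows "norm (inverse (w ^ x * of_nat (x + a) powi s)) \<le> (real x + D) ^ B * inverse (cmod w) ^ x"
proof -
  have "norm ((of_nat n :: complex) powi s) = real n powi s" for n
    by (simp add: norm_power_int)
  then have "norm (inverse ((of_nat (x + a) :: complex) powi s)) = real (x + a) powi (- s)"
    by (simp add: norm_inverse power_int_minus del: of_nat_add)
  also have "\<dots> \<le> real (x + a) powi int (nat \<bar>s\<bar>)"
    using x by (intro power_int_increasing) auto
  also have "\<dots> = real (x + a) ^ nat \<bar>s\<bar>" by (rule power_int_of_nat)
  also have "\<dots> \<le> real (x + a) ^ B" using x s by (intro power_increasing) auto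
  also have "\<dots> \<le> (real x + D) ^ B" using a by (intro power_mono) auto
  finally have "norm (inverse ((of_nat (x + a) :: complex) powi s)) \<le> (real x + D) ^ B" .
  then show ?thesis
    by (simp add: norm_inverse norm_mult norm_power power_inverse mult.commute mult_left_mono)
qed

lemma norm_brick_factor_le:
  fixes w :: "nat \<Rightarrow> complex" and j m :: "nat \<Rightarrow> nat" and s :: "nat \<Rightarrow> int"
  assumes w1: "1 < cmod (w 1)" and w: "\<And>i. i \<in> {2..r} \<Longrightarrow> 1 \<le> cmod (w i)"
    and k: "k \<in> brick_idx r m" and i: "i \<in> {1..r}"
  defines "E \<equiv> real (\<Sum>l\<in>{1..r}. m l) + (\<Sum>l\<in>{1..r}. real (j l))"
    and "B \<equiv> \<Sum>l\<in>{1..r}. nat \<bar>s l\<bar>"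
  shows "norm (inverse (w i ^ k i * of_nat (k i + j i) powi s i))
           \<le> (real (k 1) + E) ^ B * (if i = 1 then inverse (cmod (w 1)) ^ k 1 else 1)"
proof -
  define D where "D = (\<Sum>l\<in>{1..r}. real (j l))"
  have D: "0 \<le> D" by (simp add: D_def sum_nonneg)
  have "real (k i) \<le> real (k 1) + real (\<Sum>l\<in>{1..r}. m l)"
    using brick_idx_le_first[OF k i] by (metis of_nat_add of_nat_le_iff)
  then have ki: "1 \<le> k i" "real (k i) + D \<le> real (k 1) + E"
    using k i unfolding E_def D_def by (auto simp: brick_idx_def simp del: of_nat_sum)
  have wi: "1 \<le> cmod (w i)" using w1 w i by (cases "i = 1") auto
  have "norm (inverse (w i ^ k i * of_nat (k i + j i) powi s i))
      \<le> (real (k i) + D) ^ B * inverse (cmod (w i)) ^ k i"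
    using i by (intro norm_inverse_brick_factor_le ki wi) (auto simp: D_def B_def intro: member_le_sum)
  also have "\<dots> \<le> (real (k 1) + E) ^ B * (if i = 1 then inverse (cmod (w 1)) ^ k 1 else 1)"
  proof (cases "i = 1")
    case False
    have "inverse (cmod (w i)) ^ k i \<le> 1" using wi by (simp add: power_le_one inverse_le_1_iff)
    then have "(real (k i) + D) ^ B * inverse (cmod (w i)) ^ k i \<le> (real (k i) + D) ^ B"
      using D by (intro mult_left_le) auto
    also have "\<dots> \<le> (real (k 1) + E) ^ B" using ki D by (intro power_mono) auto
    finally show ?thesis using False by simp
  qed (use ki D in \<open>auto intro!: mult_right_mono power_mono\<close>)
  finally show ?thesis .
qed

lemma brick_summable:
  fixes w :: "nat \<Rightarrow> complex"
  assumes w1: "1 < cmod (w 1)" and w: "\<And>i. i \<in> {2..r} \<Longrightarrow> 1 \<le> cmod (w i)"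
  shows "(\<lambda>k. \<Prod>i\<in>{1..r}. inverse (w i ^ k i * of_nat (k i + j i) powi s i)) summable_on brick_idx r m"
proof (cases "r = 0")
  case True
  then have "brick_idx r m = {\<lambda>_. 0}" by (auto simp: brick_idx_def)
  then show ?thesis by simp
next
  case False
  define q where "q = inverse (cmod (w 1))"
  define B where "B = (\<Sum>l\<in>{1..r}. nat \<bar>s l\<bar>)"
  define E where "E = real (\<Sum>l\<in>{1..r}. m l) + (\<Sum>l\<in>{1..r}. real (j l))"
  have q: "0 < q" "q < 1" using w1 by (auto simp: q_def inverse_less_1_iff)
  show ?thesis
  proof (rule summable_on_brick_idx[where q = q and E = E and B = "B * r"])
    fix k assume k: "k \<in> brick_idx r m"
    have "norm (\<Prod>i\<in>{1..r}. inverse (w i ^ k i * of_nat (k i + j i) powi s i))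
        = (\<Prod>i\<in>{1..r}. norm (inverse (w i ^ k i * of_nat (k i + j i) powi s i)))"
      by (simp add: prod_norm)
    also have "\<dots> \<le> (\<Prod>i\<in>{1..r}. (real (k 1) + E) ^ B * (if i = 1 then q ^ k 1 else 1))"
    proof (rule prod_mono)
      fix i assume i: "i \<in> {1..r}"
      have "norm (inverse (w i ^ k i * of_nat (k i + j i) powi s i))
          \<le> (real (k 1) + E) ^ B * (if i = 1 then q ^ k 1 else 1)"
        using norm_brick_factor_le[where w = w and j = j and m = m and s = s and r = r and k = k,
            OF w1 w k i]
        unfolding q_def B_def E_def .
      then show "0 \<le> norm (inverse (w i ^ k i * of_nat (k i + j i) powi s i)) \<and>
          norm (inverse (w i ^ k i * of_nat (k i + j i) powi s i))
            \<le> (real (k 1) + E) ^ B * (if i = 1 then q ^ k 1 else 1)" by simp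
    qed
    also have "\<dots> = (real (k 1) + E) ^ (B * r) * q ^ k 1"
      using False by (simp add: prod.distrib power_mult prod.If_cases)
    finally show "norm (\<Prod>i\<in>{1..r}. inverse (w i ^ k i * of_nat (k i + j i) powi s i))
        \<le> (real (k 1) + E) ^ (B * r) * q ^ k 1" .
  qed (use q in \<open>auto simp: E_def sum_nonneg\<close>)
qed

section \<open>Partial fractions\<close>

text \<open>A list of triples \<open>(c, sh, e)\<close> stands for \<open>\<Sum> c / (x + sh)^e\<close>; the weight condition
  on the exponents is what keeps the weight of the resulting bricks under control.\<close>

definition partial_fraction_expansion :: "nat \<Rightarrow> nat \<Rightarrow> int \<Rightarrow> int \<Rightarrow> (rat \<times> nat \<times> int) list \<Rightarrow> bool" where
  "partial_fraction_expansion a b s t L \<longleftrightarrow>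
     (\<forall>(c, sh, e)\<in>set L. (sh = a \<or> sh = b) \<and> max e 0 \<le> max s 0 + max t 0) \<and>
     (\<forall>x::complex. x + of_nat a \<noteq> 0 \<longrightarrow> x + of_nat b \<noteq> 0 \<longrightarrow>
        inverse ((x + of_nat a) powi s * (x + of_nat b) powi t) =
        (\<Sum>(c, sh, e)\<leftarrow>L. of_rat c * inverse ((x + of_nat sh) powi e)))"

lemma partial_fraction_expansion_swap:
  "partial_fraction_expansion b a t s L \<Longrightarrow> partial_fraction_expansion a b s t L"
  unfolding partial_fraction_expansion_def by (auto simp: mult.commute add.commute)

lemma partial_fraction_expansion_nonpos:
  assumes "t \<le> 0"
  shows "\<exists>L. partial_fraction_expansion a b s t L"
proof -
  define n where "n = nat (- t)"
  define d :: int where "d = int b - int a"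
  define L where "L = map (\<lambda>l. (of_nat (n choose l) * of_int d ^ (n - l) :: rat, a, s - int l)) [0..<Suc n]"
  have "inverse ((x + of_nat a) powi s * (x + of_nat b) powi t) =
        (\<Sum>(c, sh, e)\<leftarrow>L. of_rat c * inverse ((x + of_nat sh) powi e))"
    if x: "x + of_nat a \<noteq> 0" for x :: complex
  proof -
    define X where "X = x + of_nat a"
    have b: "x + of_nat b = X + of_int d" by (simp add: X_def d_def)
    have t: "t = - int n" using assms by (simp add: n_def)
    have "inverse ((x + of_nat a) powi s * (x + of_nat b) powi t) = inverse (X powi s) * (X + of_int d) ^ n"
      unfolding b t X_def[symmetric] by (simp add: power_int_minus)
    also have "\<dots> = (\<Sum>l\<le>n. of_rat (of_nat (n choose l) * of_int d ^ (n - l)) * inverse (X powi (s - int l)))"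
      unfolding binomial_ring sum_distrib_left
      by (rule sum.cong) (use x in \<open>auto simp: power_int_diff X_def of_rat_mult of_rat_power field_simps\<close>)
    also have "\<dots> = (\<Sum>l\<leftarrow>[0..<Suc n]. of_rat (of_nat (n choose l) * of_int d ^ (n - l)) * inverse (X powi (s - int l)))"
      by (simp only: sum_list_distinct_conv_sum_set[OF distinct_upt] set_upt atLeast0LessThan lessThan_Suc_atMost)
    also have "\<dots> = (\<Sum>(c, sh, e)\<leftarrow>L. of_rat c * inverse ((x + of_nat sh) powi e))"
      unfolding L_def map_map by (simp only: o_def case_prod_conv X_def)
    finally show ?thesis .
  qed
  moreover have "\<forall>(c, sh, e)\<in>set L. (sh = a \<or> sh = b) \<and> max e 0 \<le> max s 0 + max t 0"
    using assms by (auto simp: L_def)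
  ultimately show ?thesis unfolding partial_fraction_expansion_def by blast
qed

lemma partial_fraction_expansion_step:
  assumes ab: "a \<noteq> b" and st: "0 < s" "0 < t"
    and L1: "partial_fraction_expansion a b s (t - 1) L1"
    and L2: "partial_fraction_expansion a b (s - 1) t L2"
  shows "\<exists>L. partial_fraction_expansion a b s t L"
proof -
  define \<alpha> :: rat where "\<alpha> = 1 / of_int (int b - int a)"
  define L where "L = map (\<lambda>(c, sh, e). (\<alpha> * c, sh, e)) L1 @ map (\<lambda>(c, sh, e). (- \<alpha> * c, sh, e)) L2"
  have "inverse ((x + of_nat a) powi s * (x + of_nat b) powi t) =
        (\<Sum>(c, sh, e)\<leftarrow>L. of_rat c * inverse ((x + of_nat sh) powi e))"
    if X: "x + of_nat a \<noteq> 0" and Y: "x + of_nat b \<noteq> 0" for x :: complex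
  proof -
    define X Y where "X = x + of_nat a" and "Y = x + of_nat b"
    have "of_rat \<alpha> * (Y - X) = 1"
      using ab by (simp add: X_def Y_def \<alpha>_def of_rat_divide of_rat_diff)
    moreover have nonzero: "X \<noteq> 0" "Y \<noteq> 0" using X Y by (simp_all add: X_def Y_def)
    moreover have "X powi s = X powi (s - 1) * X" "Y powi t = Y powi (t - 1) * Y"
      using nonzero by (simp_all add: power_int_diff)
    \<comment> \<open>\<open>1/(X Y) = \<alpha> (1/X - 1/Y)\<close> since \<open>Y - X = b - a\<close>\<close>
    ultimately have key: "inverse (X powi s * Y powi t) =
        of_rat \<alpha> * inverse (X powi s * Y powi (t - 1)) - of_rat \<alpha> * inverse (X powi (s - 1) * Y powi t)"
      by (simp add: field_simps)
    have scale: "(\<Sum>(c, sh, e)\<leftarrow>map (\<lambda>(c, sh, e). (\<beta> * c, sh, e)) L'. of_rat c * inverse ((x + of_nat sh) powi e))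
        = of_rat \<beta> * (\<Sum>(c, sh, e)\<leftarrow>L'. of_rat c * inverse ((x + of_nat sh) powi e))" for \<beta> L'
      by (induction L') (auto simp: of_rat_mult algebra_simps)
    have "inverse (X powi s * Y powi (t - 1)) = (\<Sum>(c, sh, e)\<leftarrow>L1. of_rat c * inverse ((x + of_nat sh) powi e))"
      "inverse (X powi (s - 1) * Y powi t) = (\<Sum>(c, sh, e)\<leftarrow>L2. of_rat c * inverse ((x + of_nat sh) powi e))"
      using L1 L2 X Y by (simp_all add: partial_fraction_expansion_def X_def Y_def)
    then have "(\<Sum>(c, sh, e)\<leftarrow>L. of_rat c * inverse ((x + of_nat sh) powi e)) =
        of_rat \<alpha> * inverse (X powi s * Y powi (t - 1)) - of_rat \<alpha> * inverse (X powi (s - 1) * Y powi t)"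
      unfolding L_def map_append sum_list_append scale by (simp add: of_rat_minus)
    then show ?thesis using key by (simp add: X_def Y_def)
  qed
  moreover have "\<forall>(c, sh, e)\<in>set L. (sh = a \<or> sh = b) \<and> max e 0 \<le> max s 0 + max t 0"
    using L1 L2 st unfolding partial_fraction_expansion_def L_def by fastforce
  ultimately show ?thesis unfolding partial_fraction_expansion_def by blast
qed

lemma partial_fraction_expansion_exists: "\<exists>L. partial_fraction_expansion a b s t L"
proof (induction "nat s + nat t" arbitrary: s t rule: less_induct)
  case less
  consider "t \<le> 0" | "s \<le> 0" | "a = b" "0 < s" "0 < t" | "a \<noteq> b" "0 < s" "0 < t" by linarith
  then show ?case
  proof cases
    case 1
    then show ?thesis by (rule partial_fraction_expansion_nonpos)
  next
    case 2
    then show ?thesis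
      using partial_fraction_expansion_nonpos partial_fraction_expansion_swap by blast
  next
    case 3
    then have "partial_fraction_expansion a b s t [(1, a, s + t)]"
      unfolding partial_fraction_expansion_def by (auto simp: power_int_add)
    then show ?thesis by blast
  next
    case 4
    then obtain L1 L2 where "partial_fraction_expansion a b s (t - 1) L1"
      "partial_fraction_expansion a b (s - 1) t L2"
      using less[of s "t - 1"] less[of "s - 1" t] by auto
    with 4 show ?thesis by (rule partial_fraction_expansion_step)
  qed
qed

section \<open>The telescoping identity\<close>

definition Q_idx :: "nat \<Rightarrow> nat \<Rightarrow> nat \<Rightarrow> (nat \<Rightarrow> nat) set" where
  "Q_idx N p K = {k. (p \<le> N \<longrightarrow> k p \<le> K) \<and> (\<forall>i\<in>{p..N}. 1 \<le> k i) \<and> (\<forall>i\<in>{p..<N}. k (i + 1) \<le> k i)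
                    \<and> (\<forall>i. i \<notin> {p..N} \<longrightarrow> k i = 0)}"

lemma Qf_eq_sum_Q_idx:
  "Qf N p s K z = (\<Sum>k\<in>Q_idx N p K. \<Prod>i\<in>{p..N}. inverse (z i ^ k i * of_nat (k i) powi s i))"
  by (simp add: Qf_def Q_idx_def)

lemma finite_Q_idx:
  assumes "1 \<le> p"
  shows "finite (Q_idx N p K)"
proof -
  have le_first: "k i \<le> k p" if k: "k \<in> Q_idx N p K" and i: "i \<in> {p..N}" for k i
    using i
  proof (induction i)
    case (Suc i)
    show ?case
    proof (cases "Suc i = p")
      case False
      with Suc have "i \<in> {p..<N}" "k i \<le> k p" by auto
      moreover have "\<forall>i\<in>{p..<N}. k (Suc i) \<le> k i" using k by (simp add: Q_idx_def)
      ultimately show ?thesis by fastforce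
    qed simp
  qed simp
  have "Q_idx N p K \<subseteq> {k. (\<forall>i. i \<notin> {1..N} \<longrightarrow> k i = 0) \<and> (\<forall>i\<in>{1..N}. k i \<le> K)}"
  proof (intro subsetI CollectI conjI allI ballI impI)
    fix k i assume k: "k \<in> Q_idx N p K"
    show "k i = 0" if "i \<notin> {1..N}" using k that assms by (simp add: Q_idx_def)
    show "k i \<le> K" if i: "i \<in> {1..N}"
    proof (cases "p \<le> i")
      case True
      with i have "k i \<le> k p" "k p \<le> K" using k le_first by (auto simp: Q_idx_def)
      then show ?thesis by simp
    qed (use k in \<open>simp add: Q_idx_def\<close>)
  qed
  then show ?thesis using finite_card_bounded_functions finite_subset by blast
qed

lemma sum_of_bool_shift_eq:
  fixes x J a u v :: nat
  shows "(\<Sum>K\<in>{u..v}. (of_bool (x + J = a + K) :: 'a::ring_1)) =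
     of_bool (a \<le> x + J \<and> u \<le> x + J - a \<and> x + J - a \<le> v)"
proof -
  have "x + J = a + K \<longleftrightarrow> a \<le> x + J \<and> K = x + J - a" for K by arith
  then have "(\<Sum>K\<in>{u..v}. (of_bool (x + J = a + K) :: 'a)) =
      (\<Sum>K\<in>{u..v}. if K = x + J - a then of_bool (a \<le> x + J) else 0)"
    by (intro sum.cong) auto
  then show ?thesis by (simp add: sum.delta')
qed

text \<open>The identity behind the telescoping below, read with \<open>x = n\<^sub>p\<close>, \<open>a = n\<^sub>p\<^sub>-\<^sub>1\<close>,
  \<open>J = j\<^sub>p\<^sub>-\<^sub>1\<close>: the constraints \<open>n\<^sub>p \<le> n\<^sub>p\<^sub>-\<^sub>1\<close> (descending tail) and
  \<open>n\<^sub>p - j\<^sub>p \<le> n\<^sub>p\<^sub>-\<^sub>1 - j\<^sub>p\<^sub>-\<^sub>1 + m\<^sub>p\<close> (shifted brick) differ by a band of values of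
  \<open>n\<^sub>p - n\<^sub>p\<^sub>-\<^sub>1\<close> of width \<open>|j\<^sub>p\<^sub>-\<^sub>1 - j\<^sub>p - m\<^sub>p|\<close>, whose slices produce the \<open>R\<close> terms.\<close>

lemma band_indicator_identity:
  fixes x a J jp mp :: nat
  assumes "J < a" "1 \<le> x"
  shows "(of_bool (x \<le> a) :: 'a::ring_1)
           + of_int (eps (int J) (int (jp + mp)))
             * (\<Sum>K\<in>{min J (jp + mp) + 1 .. max J (jp + mp)}. of_bool (x + J = a + K))
         = of_bool (jp < x \<and> x + J \<le> a + jp + mp) + of_bool (x \<le> jp)"
proof -
  have "(of_bool (x \<le> a) :: int)
           + eps (int J) (int (jp + mp))
             * (\<Sum>K\<in>{min J (jp + mp) + 1 .. max J (jp + mp)}. of_bool (x + J = a + K))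
         = of_bool (jp < x \<and> x + J \<le> a + jp + mp) + of_bool (x \<le> jp)"
    unfolding sum_of_bool_shift_eq using assms by (auto simp: eps_def)
  then have "of_int ((of_bool (x \<le> a) :: int)
           + eps (int J) (int (jp + mp))
             * (\<Sum>K\<in>{min J (jp + mp) + 1 .. max J (jp + mp)}. of_bool (x + J = a + K)))
         = (of_int (of_bool (jp < x \<and> x + J \<le> a + jp + mp) + of_bool (x \<le> jp)) :: 'a)"
    by (rule arg_cong)
  then show ?thesis by (simp add: of_int_sum)
qed

lemma Qf_empty_tail: "Qf N (Suc N) s K z = 1"
proof -
  have "Q_idx N (Suc N) K = {\<lambda>_. 0}" by (auto simp: Q_idx_def)
  then show ?thesis by (simp add: Qf_eq_sum_Q_idx)
qed

locale brick_domain =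
  fixes N :: nat and s :: "nat \<Rightarrow> int" and m j :: "nat \<Rightarrow> nat" and z :: "nat \<Rightarrow> complex"
  assumes N: "1 \<le> N" and z: "z \<in> zdom N"
begin

lemma norm_z_ge_1: "i \<in> {1..N} \<Longrightarrow> 1 \<le> cmod (z i)"
  using z by (cases "i = 1") (auto simp: zdom_def)

lemma z_nonzero: "i \<in> {1..N} \<Longrightarrow> z i \<noteq> 0"
  using norm_z_ge_1 by fastforce

definition lattice :: "(nat \<Rightarrow> nat) set" where
  "lattice = brick_idx N (\<lambda>i. j i + m i)"

definition La_term :: "(nat \<Rightarrow> nat) \<Rightarrow> complex" where
  "La_term n = (\<Prod>i\<in>{1..N}. inverse (z i ^ n i * of_nat (n i) powi s i))"

lemma La_term_summable_on:
  assumes "A \<subseteq> lattice"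
  shows "La_term summable_on A"
proof -
  have "(\<lambda>n. \<Prod>i\<in>{1..N}. inverse (z i ^ n i * of_nat (n i + 0) powi s i)) summable_on lattice"
    unfolding lattice_def by (rule brick_summable) (use z in \<open>auto simp: zdom_def\<close>)
  then have "La_term summable_on lattice" by (simp add: La_term_def[abs_def])
  then show ?thesis using assms by (rule summable_on_subset_banach)
qed

lemma lattice_memD:
  assumes "n \<in> lattice"
  shows "\<And>i. i \<in> {1..N} \<Longrightarrow> 1 \<le> n i" "\<And>i. i \<notin> {1..N} \<Longrightarrow> n i = 0"
  using assms by (auto simp: lattice_def brick_idx_def)

definition shifted_head :: "nat \<Rightarrow> (nat \<Rightarrow> nat) \<Rightarrow> bool" where
  "shifted_head r n \<longleftrightarrow>
     (\<forall>i\<in>{1..r}. j i < n i) \<and> (\<forall>i\<in>{2..r}. n i + j (i - 1) \<le> n (i - 1) + j i + m i)"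

definition descending_tail :: "nat \<Rightarrow> (nat \<Rightarrow> nat) \<Rightarrow> bool" where
  "descending_tail p n \<longleftrightarrow> (\<forall>i\<in>{Suc p..N}. 2 \<le> i \<longrightarrow> n i \<le> n (i - 1))"

definition unshift :: "nat \<Rightarrow> (nat \<Rightarrow> nat) \<Rightarrow> nat \<Rightarrow> nat" where
  "unshift r n = (\<lambda>i. if i \<in> {1..r} then n i - j i else 0)"

lemma unshift_in_brick_idx:
  assumes "shifted_head r n"
  shows "unshift r n \<in> brick_idx r m"
proof -
  have gt: "\<And>i. i \<in> {1..r} \<Longrightarrow> j i < n i"
    and step: "\<And>i. i \<in> {2..r} \<Longrightarrow> n i + j (i - 1) \<le> n (i - 1) + j i + m i"
    using assms by (auto simp: shifted_head_def)
  have "n i - j i \<le> n (i - 1) - j (i - 1) + m i" if "i \<in> {2..r}" for i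
    using step[OF that] gt[of i] gt[of "i - 1"] that by auto
  then show ?thesis using gt by (auto simp: unshift_def brick_idx_def Suc_le_eq)
qed

lemma shifted_head_step:
  assumes "1 \<le> p"
  shows "shifted_head p n \<longleftrightarrow> shifted_head (p - 1) n \<and> j p < n p \<and>
           (2 \<le> p \<longrightarrow> n p + j (p - 1) \<le> n (p - 1) + j p + m p)"
proof -
  have "{1..p} = insert p {1..p - 1}" "{2..p} = (if 2 \<le> p then insert p {2..p - 1} else {})"
    using assms by auto
  then show ?thesis by (auto simp: shifted_head_def)
qed

lemma descending_tail_step:
  assumes "1 \<le> p" "p \<le> N"
  shows "descending_tail (p - 1) n \<longleftrightarrow> descending_tail p n \<and> (2 \<le> p \<longrightarrow> n p \<le> n (p - 1))"
proof -
  have "{Suc (p - 1)..N} = insert p {Suc p..N}" using assms by auto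
  then show ?thesis by (auto simp: descending_tail_def)
qed

lemma descending_tailD:
  assumes "descending_tail p n" "1 \<le> p" "i \<in> {p..<N}"
  shows "n (i + 1) \<le> n i"
  using assms by (auto simp: descending_tail_def dest!: bspec[of _ _ "i + 1"])

definition hybrid_sum :: "nat \<Rightarrow> complex" where
  "hybrid_sum p = (\<Sum>\<^sub>\<infinity>n\<in>{n\<in>lattice. shifted_head p n \<and> descending_tail p n}. La_term n)"

text \<open>The guard \<open>p \<le> N\<close> makes \<open>Q_region (Suc N)\<close> the region of \<open>hybrid_sum N\<close>.\<close>

definition Q_region :: "nat \<Rightarrow> (nat \<Rightarrow> nat) set" where
  "Q_region p = {n\<in>lattice. shifted_head (p - 1) n \<and> descending_tail p n \<and> (p \<le> N \<longrightarrow> n p \<le> j p)}"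

definition R_region :: "nat \<Rightarrow> nat \<Rightarrow> (nat \<Rightarrow> nat) set" where
  "R_region p K = {n\<in>lattice. shifted_head (p - 1) n \<and> descending_tail p n \<and> n p + j (p - 1) = n (p - 1) + K}"

definition Q_piece :: "nat \<Rightarrow> complex" where
  "Q_piece p = (\<Sum>\<^sub>\<infinity>n\<in>Q_region p. La_term n)"

definition R_piece :: "nat \<Rightarrow> nat \<Rightarrow> complex" where
  "R_piece p K = (\<Sum>\<^sub>\<infinity>n\<in>R_region p K. La_term n)"

lemma infsum_La_term_restrict:
  "(\<Sum>\<^sub>\<infinity>n\<in>{n\<in>lattice. P n}. La_term n) = (\<Sum>\<^sub>\<infinity>n\<in>lattice. of_bool (P n) * La_term n)"
  by (rule infsum_cong_neutral) auto

lemma summable_on_La_term_restrict: "(\<lambda>n. of_bool (P n) * La_term n) summable_on lattice"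
proof -
  have "La_term summable_on {n\<in>lattice. P n}" by (rule La_term_summable_on) auto
  then show ?thesis by (subst summable_on_cong_neutral[symmetric]) auto
qed

lemma hybrid_sum_step_indicator:
  assumes p: "p \<in> {1..N}" and n: "n \<in> lattice"
  defines "c \<equiv> if 2 \<le> p then of_int (eps (int (j (p - 1))) (int (j p + m p))) else (0::complex)"
  shows "of_bool (shifted_head (p - 1) n \<and> descending_tail (p - 1) n)
           + c * (\<Sum>K\<in>{min (j (p - 1)) (j p + m p) + 1 .. max (j (p - 1)) (j p + m p)}.
                    of_bool (shifted_head (p - 1) n \<and> descending_tail p n \<and> n p + j (p - 1) = n (p - 1) + K))
         = of_bool (shifted_head p n \<and> descending_tail p n)
           + of_bool (shifted_head (p - 1) n \<and> descending_tail p n \<and> n p \<le> j p)"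
proof (cases "shifted_head (p - 1) n \<and> descending_tail p n")
  case False
  then show ?thesis
    using shifted_head_step[of p n] descending_tail_step[of p n] p
    by (cases "shifted_head (p - 1) n") auto
next
  case True
  show ?thesis
  proof (cases "p = 1")
    case True
    then show ?thesis
      using \<open>shifted_head (p - 1) n \<and> descending_tail p n\<close> shifted_head_step[of p n]
        descending_tail_step[of p n] p
      by (auto simp: c_def)
  next
    case False
    then have p2: "2 \<le> p" using p by auto
    have "j (p - 1) < n (p - 1)" "1 \<le> n p"
      using True p2 p lattice_memD(1)[OF n, of p] by (auto simp: shifted_head_def)
    from band_indicator_identity[OF this, of "j p" "m p"]
    show ?thesis
      using True p2 p shifted_head_step[of p n] descending_tail_step[of p n]
      by (simp add: c_def)
  qed
qed

lemma sum_R_piece_eq_infsum: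
  assumes "finite Ks"
  shows "(\<lambda>n. \<Sum>K\<in>Ks. of_bool (n \<in> R_region p K) * La_term n) summable_on lattice"
    and "(\<Sum>K\<in>Ks. R_piece p K) = (\<Sum>\<^sub>\<infinity>n\<in>lattice. \<Sum>K\<in>Ks. of_bool (n \<in> R_region p K) * La_term n)"
proof -
  have "R_piece p K = (\<Sum>\<^sub>\<infinity>n\<in>lattice. of_bool (n \<in> R_region p K) * La_term n)" for K
    unfolding R_piece_def by (rule infsum_cong_neutral) (auto simp: R_region_def)
  moreover have "(\<lambda>n. of_bool (n \<in> R_region p K) * La_term n) summable_on lattice" for K
    using summable_on_La_term_restrict[of "\<lambda>n. n \<in> R_region p K"] .
  ultimately show "(\<lambda>n. \<Sum>K\<in>Ks. of_bool (n \<in> R_region p K) * La_term n) summable_on lattice"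
    and "(\<Sum>K\<in>Ks. R_piece p K) = (\<Sum>\<^sub>\<infinity>n\<in>lattice. \<Sum>K\<in>Ks. of_bool (n \<in> R_region p K) * La_term n)"
    using infsum_sum_list[of "sorted_list_of_set Ks" "\<lambda>K n. of_bool (n \<in> R_region p K) * La_term n" lattice]
      assms by (simp_all add: sum_list_distinct_conv_sum_set)
qed

lemma hybrid_sum_step:
  assumes p: "p \<in> {1..N}"
  defines "c \<equiv> if 2 \<le> p then of_int (eps (int (j (p - 1))) (int (j p + m p))) else (0::complex)"
  shows "hybrid_sum (p - 1)
           + c * (\<Sum>K\<in>{min (j (p - 1)) (j p + m p) + 1 .. max (j (p - 1)) (j p + m p)}. R_piece p K)
         = hybrid_sum p + Q_piece p"
proof -
  define Ks where "Ks = {min (j (p - 1)) (j p + m p) + 1 .. max (j (p - 1)) (j p + m p)}"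
  define R where "R K n \<longleftrightarrow> n \<in> R_region p K" for K n
  have R_sum: "(\<lambda>n. c * (\<Sum>K\<in>Ks. of_bool (R K n) * La_term n)) summable_on lattice"
      "c * (\<Sum>K\<in>Ks. R_piece p K) = (\<Sum>\<^sub>\<infinity>n\<in>lattice. c * (\<Sum>K\<in>Ks. of_bool (R K n) * La_term n))"
    using sum_R_piece_eq_infsum[of Ks p] by (auto simp: Ks_def R_def infsum_cmult_right' intro: summable_on_cmult_right)
  have "hybrid_sum (p - 1) + c * (\<Sum>K\<in>Ks. R_piece p K)
      = (\<Sum>\<^sub>\<infinity>n\<in>lattice. of_bool (shifted_head (p - 1) n \<and> descending_tail (p - 1) n) * La_term n
                          + c * (\<Sum>K\<in>Ks. of_bool (R K n) * La_term n))"
    unfolding hybrid_sum_def infsum_La_term_restrict R_sum(2)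
    by (rule infsum_add[symmetric]) (auto intro: summable_on_La_term_restrict R_sum(1))
  also have "\<dots> = (\<Sum>\<^sub>\<infinity>n\<in>lattice. of_bool (shifted_head p n \<and> descending_tail p n) * La_term n
      + of_bool (shifted_head (p - 1) n \<and> descending_tail p n \<and> n p \<le> j p) * La_term n)"
  proof (rule infsum_cong)
    fix n assume "n \<in> lattice"
    have "of_bool (shifted_head (p - 1) n \<and> descending_tail (p - 1) n) * La_term n
          + c * (\<Sum>K\<in>Ks. of_bool (R K n) * La_term n)
        = (of_bool (shifted_head (p - 1) n \<and> descending_tail (p - 1) n)
           + c * (\<Sum>K\<in>Ks. of_bool (R K n))) * La_term n"
      by (simp add: distrib_right sum_distrib_right mult.assoc)
    also have "\<dots> = (of_bool (shifted_head p n \<and> descending_tail p n)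
           + of_bool (shifted_head (p - 1) n \<and> descending_tail p n \<and> n p \<le> j p)) * La_term n"
      using hybrid_sum_step_indicator[OF p \<open>n \<in> lattice\<close>] \<open>n \<in> lattice\<close>
      by (simp add: c_def Ks_def R_def R_region_def)
    finally show "of_bool (shifted_head (p - 1) n \<and> descending_tail (p - 1) n) * La_term n
          + c * (\<Sum>K\<in>Ks. of_bool (R K n) * La_term n)
        = of_bool (shifted_head p n \<and> descending_tail p n) * La_term n
          + of_bool (shifted_head (p - 1) n \<and> descending_tail p n \<and> n p \<le> j p) * La_term n"
      by (simp add: distrib_right)
  qed
  also have "\<dots> = hybrid_sum p + Q_piece p"
    using p unfolding hybrid_sum_def Q_piece_def Q_region_def infsum_La_term_restrict
    by (subst infsum_add) (auto intro: summable_on_La_term_restrict)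
  finally show ?thesis by (simp add: Ks_def)
qed

lemma glued_in_lattice:
  assumes p: "1 \<le> p" "p \<le> Suc N" and a: "a \<in> brick_idx (p - 1) m"
    and head: "\<And>i. i \<in> {1..p - 1} \<Longrightarrow> n i = a i + j i"
    and pos: "\<And>i. i \<in> {p..N} \<Longrightarrow> 1 \<le> n i"
    and zero: "\<And>i. i \<notin> {1..N} \<Longrightarrow> n i = 0"
    and first: "2 \<le> p \<Longrightarrow> p \<le> N \<Longrightarrow> n p \<le> n (p - 1) + j p + m p"
    and tail: "descending_tail p n"
  shows "n \<in> lattice" "shifted_head (p - 1) n"
proof -
  have a1: "\<And>i. i \<in> {1..p - 1} \<Longrightarrow> 1 \<le> a i"
    and a2: "\<And>i. i \<in> {2..p - 1} \<Longrightarrow> a i \<le> a (i - 1) + m i"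
    using a by (auto simp: brick_idx_def)
  have head_step: "n i \<le> n (i - 1) + j i + m i \<and> n i + j (i - 1) \<le> n (i - 1) + j i + m i"
    if i: "i \<in> {2..p - 1}" for i
  proof -
    have "i \<in> {1..p - 1}" "i - 1 \<in> {1..p - 1}" using i by auto
    then show ?thesis using a2[OF i] head[of i] head[of "i - 1"] by auto
  qed
  show "shifted_head (p - 1) n"
    unfolding shifted_head_def using a1 head head_step by fastforce
  show "n \<in> lattice"
    unfolding lattice_def brick_idx_def
  proof (intro CollectI conjI ballI allI impI)
    fix i assume i: "i \<in> {1..N}"
    show "1 \<le> n i"
    proof (cases "i \<le> p - 1")
      case True
      then have "i \<in> {1..p - 1}" using i by auto
      then show ?thesis using a1 head by fastforce
    qed (use i pos in auto)
  next
    fix i assume i: "i \<in> {2..N}"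
    consider "i \<le> p - 1" | "i = p" | "p < i" by linarith
    then show "n i \<le> n (i - 1) + (j i + m i)"
    proof cases
      case 1 then show ?thesis using i head_step[of i] by auto
    next
      case 2 then show ?thesis using i first by auto
    next
      case 3 then show ?thesis using i tail by (auto simp: descending_tail_def)
    qed
  qed (rule zero)
qed

lemma La_term_split:
  assumes p: "1 \<le> p" "p \<le> Suc N" and head: "\<And>i. i \<in> {1..p - 1} \<Longrightarrow> n i = a i + j i"
  shows "(\<Prod>i\<in>{1..p - 1}. z i ^ j i) * La_term n =
    (\<Prod>i\<in>{1..p - 1}. inverse (z i ^ a i * of_nat (a i + j i) powi s i)) *
    (\<Prod>i\<in>{p..N}. inverse (z i ^ n i * of_nat (n i) powi s i))"
proof -
  have "(\<Prod>i\<in>{1..p - 1}. z i ^ j i) * (\<Prod>i\<in>{1..p - 1}. inverse (z i ^ n i * of_nat (n i) powi s i))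
      = (\<Prod>i\<in>{1..p - 1}. inverse (z i ^ a i * of_nat (a i + j i) powi s i))"
    unfolding prod.distrib[symmetric]
    by (rule prod.cong) (use p head z_nonzero in \<open>auto simp: power_add inverse_mult_distrib\<close>)
  then show ?thesis
    unfolding La_term_def prod.atLeastAtMost_split_at[OF p] by (simp add: mult.assoc)
qed

definition tail_from :: "nat \<Rightarrow> (nat \<Rightarrow> nat) \<Rightarrow> nat \<Rightarrow> nat" where
  "tail_from p n = (\<lambda>i. if i \<in> {p..N} then n i else 0)"

definition glue_Q :: "nat \<Rightarrow> (nat \<Rightarrow> nat) \<times> (nat \<Rightarrow> nat) \<Rightarrow> nat \<Rightarrow> nat" where
  "glue_Q p = (\<lambda>(a, q) i. if i \<in> {1..p - 1} then a i + j i else q i)"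

lemma unshift_add_shift:
  assumes "shifted_head r n" "i \<in> {1..r}"
  shows "unshift r n i + j i = n i"
proof -
  have "j i < n i" using assms by (simp add: shifted_head_def)
  then show ?thesis using assms(2) by (simp add: unshift_def)
qed

lemma glue_Q_mem:
  assumes p: "1 \<le> p" "p \<le> Suc N" and a: "a \<in> brick_idx (p - 1) m" and q: "q \<in> Q_idx N p (j p)"
  shows "glue_Q p (a, q) \<in> Q_region p"
    and "(unshift (p - 1) (glue_Q p (a, q)), tail_from p (glue_Q p (a, q))) = (a, q)"
proof -
  have q_props: "\<And>i. i \<in> {p..N} \<Longrightarrow> 1 \<le> q i" "\<And>i. i \<notin> {p..N} \<Longrightarrow> q i = 0"
    "p \<le> N \<Longrightarrow> q p \<le> j p" "\<And>i. i \<in> {p..<N} \<Longrightarrow> q (i + 1) \<le> q i"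
    using q by (auto simp: Q_idx_def)
  have glue_apply: "glue_Q p (a, q) i = (if i \<in> {1..p - 1} then a i + j i else q i)" for i
    by (simp add: glue_Q_def)
  have tail: "descending_tail p (glue_Q p (a, q))"
    unfolding descending_tail_def
  proof (intro ballI impI)
    fix i assume i: "i \<in> {Suc p..N}"
    then have "i - 1 \<in> {p..<N}" "i \<notin> {1..p - 1}" "i - 1 \<notin> {1..p - 1}" by auto
    then show "glue_Q p (a, q) i \<le> glue_Q p (a, q) (i - 1)"
      using q_props(4)[of "i - 1"] i by (auto simp: glue_apply)
  qed
  have head: "\<And>i. i \<in> {1..p - 1} \<Longrightarrow> glue_Q p (a, q) i = a i + j i"
    and pos: "\<And>i. i \<in> {p..N} \<Longrightarrow> 1 \<le> glue_Q p (a, q) i"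
    and zero: "\<And>i. i \<notin> {1..N} \<Longrightarrow> glue_Q p (a, q) i = 0"
    and first: "p \<le> N \<Longrightarrow> glue_Q p (a, q) p \<le> j p"
    using p q_props by (auto simp: glue_apply)
  have "glue_Q p (a, q) \<in> lattice \<and> shifted_head (p - 1) (glue_Q p (a, q))"
    using glued_in_lattice[OF p a head pos zero _ tail] first by force
  then show "glue_Q p (a, q) \<in> Q_region p" using tail first by (simp add: Q_region_def)
  have "a i = 0" if "i \<notin> {1..p - 1}" for i using a that by (simp add: brick_idx_def)
  then show "(unshift (p - 1) (glue_Q p (a, q)), tail_from p (glue_Q p (a, q))) = (a, q)"
    using q_props(2) p by (auto simp: tail_from_def unshift_def glue_apply fun_eq_iff)
qed

lemma cut_Q_mem:
  assumes p: "1 \<le> p" "p \<le> Suc N" and n: "n \<in> Q_region p"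
  shows "(unshift (p - 1) n, tail_from p n) \<in> brick_idx (p - 1) m \<times> Q_idx N p (j p)"
    and "glue_Q p (unshift (p - 1) n, tail_from p n) = n"
proof -
  have head: "shifted_head (p - 1) n" and tail: "descending_tail p n" and guard: "p \<le> N \<longrightarrow> n p \<le> j p"
    and n_lattice: "n \<in> lattice" using n by (auto simp: Q_region_def)
  have "tail_from p n \<in> Q_idx N p (j p)"
    unfolding Q_idx_def tail_from_def
  proof (intro CollectI conjI ballI allI impI)
    fix i assume "i \<in> {p..N}"
    then show "1 \<le> (if i \<in> {p..N} then n i else 0)" using lattice_memD(1)[OF n_lattice, of i] p by auto
  next
    fix i assume "i \<in> {p..<N}"
    then show "(if i + 1 \<in> {p..N} then n (i + 1) else 0) \<le> (if i \<in> {p..N} then n i else 0)"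
      using descending_tailD[OF tail p(1)] by auto
  qed (use guard in auto)
  then show "(unshift (p - 1) n, tail_from p n) \<in> brick_idx (p - 1) m \<times> Q_idx N p (j p)"
    using unshift_in_brick_idx[OF head] by simp
  have "i \<in> {1..p - 1} \<or> i \<in> {p..N} \<or> i \<notin> {1..N}" for i by auto
  then show "glue_Q p (unshift (p - 1) n, tail_from p n) = n"
    using unshift_add_shift[OF head] lattice_memD(2)[OF n_lattice]
    by (auto simp: glue_Q_def tail_from_def fun_eq_iff)
qed

lemma bij_betw_glue_Q:
  assumes p: "1 \<le> p" "p \<le> Suc N"
  shows "bij_betw (glue_Q p) (brick_idx (p - 1) m \<times> Q_idx N p (j p)) (Q_region p)"
  by (rule bij_betw_byWitness[where f' = "\<lambda>n. (unshift (p - 1) n, tail_from p n)"])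
    (use glue_Q_mem[OF p] cut_Q_mem[OF p] in auto)

definition Q_term :: "nat \<Rightarrow> (nat \<Rightarrow> nat) \<Rightarrow> complex" where
  "Q_term p q = (\<Prod>i\<in>{p..N}. inverse (z i ^ q i * of_nat (q i) powi s i))"

lemma Qf_eq_sum_Q_term: "Qf N p s K z = sum (Q_term p) (Q_idx N p K)"
  by (simp add: Qf_eq_sum_Q_idx Q_term_def)

lemma Q_piece_eq:
  assumes p: "1 \<le> p" "p \<le> Suc N"
  shows "(\<Prod>i\<in>{1..p - 1}. z i ^ j i) * Q_piece p = Brick (p - 1) s m j z * Qf N p s (j p) z"
proof -
  have "(\<Sum>\<^sub>\<infinity>a\<in>brick_idx (p - 1) m. (\<Prod>i\<in>{1..p - 1}. inverse (z i ^ a i * of_nat (a i + j i) powi s i))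
          * sum (Q_term p) (Q_idx N p (j p)))
      = (\<Sum>\<^sub>\<infinity>n\<in>Q_region p. (\<Prod>i\<in>{1..p - 1}. z i ^ j i) * La_term n)"
  proof (rule infsum_Sigma_reindex[OF bij_betw_glue_Q[OF p]])
    show "finite (Q_idx N p (j p))" by (rule finite_Q_idx[OF p(1)])
    show "(\<lambda>n. (\<Prod>i\<in>{1..p - 1}. z i ^ j i) * La_term n) summable_on Q_region p"
      by (intro summable_on_cmult_right La_term_summable_on) (auto simp: Q_region_def)
    fix a q
    have "(\<Prod>i\<in>{p..N}. inverse (z i ^ glue_Q p (a, q) i * of_nat (glue_Q p (a, q) i) powi s i))
        = (\<Prod>i\<in>{p..N}. inverse (z i ^ q i * of_nat (q i) powi s i))"
      by (rule prod.cong) (auto simp: glue_Q_def)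
    then show "(\<Prod>i\<in>{1..p - 1}. z i ^ j i) * La_term (glue_Q p (a, q))
        = (\<Prod>i\<in>{1..p - 1}. inverse (z i ^ a i * of_nat (a i + j i) powi s i)) * Q_term p q"
      using La_term_split[OF p, of "glue_Q p (a, q)" a] by (simp add: glue_Q_def Q_term_def)
  qed
  then show ?thesis
    by (simp add: Brick_def Qf_eq_sum_Q_term Q_piece_def infsum_cmult_left' infsum_cmult_right')
qed

definition Rf_head :: "nat \<Rightarrow> nat \<Rightarrow> (nat \<Rightarrow> nat) \<Rightarrow> complex" where
  "Rf_head p K a = (\<Prod>i\<in>{1..p - 2}. inverse (z i ^ a i)) * inverse ((z (p - 1) * z p) ^ a (p - 1))
     * inverse ((\<Prod>i\<in>{1..p - 1}. of_nat (a i + j i) powi s i) * of_nat (a (p - 1) + K) powi s p)"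

lemma Rf_eq_infsum_Rf_head:
  "Rf N p s m j z K =
     (\<Sum>\<^sub>\<infinity>a\<in>brick_idx (p - 1) m. Rf_head p K a * sum (Q_term (Suc p)) (Q_idx N (Suc p) (a (p - 1) + K)))"
  by (simp add: Rf_def Rf_head_def Qf_eq_sum_Q_term)

lemma Rf_head_eq:
  assumes p: "2 \<le> p" and zp: "z p \<noteq> 0"
  shows "(\<Prod>i\<in>{1..p - 1}. inverse (z i ^ a i * of_nat (a i + j i) powi s i))
           * (z p ^ K * inverse (z p ^ (a (p - 1) + K) * of_nat (a (p - 1) + K) powi s p))
       = Rf_head p K a"
proof -
  have "(\<Prod>i\<in>{1..p - 1}. inverse (z i ^ a i * of_nat (a i + j i) powi s i))
      = (\<Prod>i\<in>{1..p - 1}. inverse (z i ^ a i)) * inverse (\<Prod>i\<in>{1..p - 1}. of_nat (a i + j i) powi s i)"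
    by (simp add: inverse_mult_distrib prod.distrib flip: prod_inversef[unfolded comp_def])
  moreover have "(\<Prod>i\<in>{1..p - 1}. inverse (z i ^ a i))
      = (\<Prod>i\<in>{1..p - 2}. inverse (z i ^ a i)) * inverse (z (p - 1) ^ a (p - 1))"
    by (rule prod.atLeastAtMost_last[OF p])
  moreover have "z p ^ K * inverse (z p ^ (a (p - 1) + K) * of_nat (a (p - 1) + K) powi s p)
      = inverse (z p ^ a (p - 1)) * inverse (of_nat (a (p - 1) + K) powi s p)"
    using zp by (simp add: power_add inverse_mult_distrib)
  ultimately show ?thesis
    unfolding Rf_head_def by (simp only: power_mult_distrib inverse_mult_distrib mult_ac)
qed

definition glue_R :: "nat \<Rightarrow> nat \<Rightarrow> (nat \<Rightarrow> nat) \<times> (nat \<Rightarrow> nat) \<Rightarrow> nat \<Rightarrow> nat" where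
  "glue_R p K = (\<lambda>(a, q) i. if i \<in> {1..p - 1} then a i + j i else if i = p then a (p - 1) + K else q i)"

lemma glue_R_mem:
  assumes p: "p \<in> {2..N}" and K: "K \<le> max (j (p - 1)) (j p + m p)"
    and a: "a \<in> brick_idx (p - 1) m" and q: "q \<in> Q_idx N (Suc p) (a (p - 1) + K)"
  shows "glue_R p K (a, q) \<in> R_region p K"
    and "(unshift (p - 1) (glue_R p K (a, q)), tail_from (Suc p) (glue_R p K (a, q))) = (a, q)"
proof -
  have p1: "1 \<le> p" "p \<le> Suc N" and p2: "2 \<le> p" "p \<le> N" using p by auto
  have glue_apply: "glue_R p K (a, q) i =
      (if i \<in> {1..p - 1} then a i + j i else if i = p then a (p - 1) + K else q i)" for i
    by (simp add: glue_R_def)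
  have q_props: "\<And>i. i \<in> {Suc p..N} \<Longrightarrow> 1 \<le> q i" "\<And>i. i \<notin> {Suc p..N} \<Longrightarrow> q i = 0"
    "Suc p \<le> N \<Longrightarrow> q (Suc p) \<le> a (p - 1) + K" "\<And>i. i \<in> {Suc p..<N} \<Longrightarrow> q (i + 1) \<le> q i"
    using q by (auto simp: Q_idx_def)
  have a0: "\<And>i. i \<notin> {1..p - 1} \<Longrightarrow> a i = 0" and a1: "1 \<le> a (p - 1)"
    using a p2 by (auto simp: brick_idx_def)
  have tail: "descending_tail p (glue_R p K (a, q))"
    unfolding descending_tail_def
  proof (intro ballI impI)
    fix i assume i: "i \<in> {Suc p..N}"
    show "glue_R p K (a, q) i \<le> glue_R p K (a, q) (i - 1)"
    proof (cases "i = Suc p")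
      case True
      then show ?thesis using i q_props(3) by (auto simp: glue_apply)
    next
      case False
      then have "i - 1 \<in> {Suc p..<N}" using i by auto
      then show ?thesis using q_props(4)[of "i - 1"] i by (auto simp: glue_apply)
    qed
  qed
  have head: "\<And>i. i \<in> {1..p - 1} \<Longrightarrow> glue_R p K (a, q) i = a i + j i"
    and pos: "\<And>i. i \<in> {p..N} \<Longrightarrow> 1 \<le> glue_R p K (a, q) i"
    and zero: "\<And>i. i \<notin> {1..N} \<Longrightarrow> glue_R p K (a, q) i = 0"
    and first: "glue_R p K (a, q) p \<le> glue_R p K (a, q) (p - 1) + j p + m p"
    and band: "glue_R p K (a, q) p + j (p - 1) = glue_R p K (a, q) (p - 1) + K"
    using p2 a1 q_props(1,2) K by (auto simp: glue_apply)
  have "glue_R p K (a, q) \<in> lattice \<and> shifted_head (p - 1) (glue_R p K (a, q))"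
    using glued_in_lattice[OF p1 a head pos zero _ tail] first by blast
  then show "glue_R p K (a, q) \<in> R_region p K" using tail band by (simp add: R_region_def)
  show "(unshift (p - 1) (glue_R p K (a, q)), tail_from (Suc p) (glue_R p K (a, q))) = (a, q)"
    using a0 q_props(2) p2 by (auto simp: tail_from_def unshift_def glue_apply fun_eq_iff)
qed

lemma cut_R_mem:
  assumes p: "p \<in> {2..N}" and n: "n \<in> R_region p K"
  shows "(unshift (p - 1) n, tail_from (Suc p) n)
           \<in> Sigma (brick_idx (p - 1) m) (\<lambda>a. Q_idx N (Suc p) (a (p - 1) + K))"
    and "glue_R p K (unshift (p - 1) n, tail_from (Suc p) n) = n"
proof -
  have p2: "2 \<le> p" "p \<le> N" using p by auto
  have head: "shifted_head (p - 1) n" and tail: "descending_tail p n"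
    and band: "n p + j (p - 1) = n (p - 1) + K" and n_lattice: "n \<in> lattice"
    using n by (auto simp: R_region_def)
  have gt: "j (p - 1) < n (p - 1)" using head p2 by (simp add: shifted_head_def)
  have "tail_from (Suc p) n \<in> Q_idx N (Suc p) (unshift (p - 1) n (p - 1) + K)"
    unfolding Q_idx_def tail_from_def
  proof (intro CollectI conjI ballI allI impI)
    assume "Suc p \<le> N"
    then have "n (Suc p) \<le> n p" using descending_tailD[OF tail, of p] p2 by simp
    then show "(if Suc p \<in> {Suc p..N} then n (Suc p) else 0) \<le> unshift (p - 1) n (p - 1) + K"
      using band gt p2 by (auto simp: unshift_def)
  next
    fix i assume "i \<in> {Suc p..N}"
    then show "1 \<le> (if i \<in> {Suc p..N} then n i else 0)" using lattice_memD(1)[OF n_lattice, of i] by auto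
  next
    fix i assume "i \<in> {Suc p..<N}"
    then show "(if i + 1 \<in> {Suc p..N} then n (i + 1) else 0) \<le> (if i \<in> {Suc p..N} then n i else 0)"
      using descending_tailD[OF tail, of i] p2 by auto
  qed auto
  then show "(unshift (p - 1) n, tail_from (Suc p) n)
      \<in> Sigma (brick_idx (p - 1) m) (\<lambda>a. Q_idx N (Suc p) (a (p - 1) + K))"
    using unshift_in_brick_idx[OF head] by simp
  have "n p = unshift (p - 1) n (p - 1) + K" using band gt p2 by (auto simp: unshift_def)
  moreover have "i \<in> {1..p - 1} \<or> i = p \<or> i \<in> {Suc p..N} \<or> i \<notin> {1..N}" for i by auto
  ultimately show "glue_R p K (unshift (p - 1) n, tail_from (Suc p) n) = n"
    using unshift_add_shift[OF head] lattice_memD(2)[OF n_lattice] p2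
    by (auto simp: glue_R_def tail_from_def fun_eq_iff)
qed

lemma bij_betw_glue_R:
  assumes p: "p \<in> {2..N}" and K: "K \<le> max (j (p - 1)) (j p + m p)"
  shows "bij_betw (glue_R p K) (Sigma (brick_idx (p - 1) m) (\<lambda>a. Q_idx N (Suc p) (a (p - 1) + K)))
           (R_region p K)"
  by (rule bij_betw_byWitness[where f' = "\<lambda>n. (unshift (p - 1) n, tail_from (Suc p) n)"])
    (use glue_R_mem[OF p K] cut_R_mem[OF p] in auto)

lemma R_piece_eq:
  assumes p: "p \<in> {2..N}" and K: "K \<le> max (j (p - 1)) (j p + m p)"
  shows "(\<Prod>i\<in>{1..p - 1}. z i ^ j i) * z p ^ K * R_piece p K = Rf N p s m j z K"
proof -
  have p1: "1 \<le> p" "p \<le> Suc N" and p2: "2 \<le> p" "p \<le> N" using p by auto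
  have "(\<Sum>\<^sub>\<infinity>a\<in>brick_idx (p - 1) m. Rf_head p K a * sum (Q_term (Suc p)) (Q_idx N (Suc p) (a (p - 1) + K)))
      = (\<Sum>\<^sub>\<infinity>n\<in>R_region p K. (\<Prod>i\<in>{1..p - 1}. z i ^ j i) * z p ^ K * La_term n)"
  proof (rule infsum_Sigma_reindex[OF bij_betw_glue_R[OF p K]])
    show "finite (Q_idx N (Suc p) (a (p - 1) + K))" for a by (rule finite_Q_idx) simp
    show "(\<lambda>n. (\<Prod>i\<in>{1..p - 1}. z i ^ j i) * z p ^ K * La_term n) summable_on R_region p K"
      by (intro summable_on_cmult_right La_term_summable_on) (auto simp: R_region_def)
    fix a q
    have "(\<Prod>i\<in>{p..N}. inverse (z i ^ glue_R p K (a, q) i * of_nat (glue_R p K (a, q) i) powi s i))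
        = inverse (z p ^ (a (p - 1) + K) * of_nat (a (p - 1) + K) powi s p) * Q_term (Suc p) q"
      unfolding prod.atLeast_Suc_atMost[OF p2(2)] Q_term_def
      by (rule arg_cong2[where f = "(*)"]) (auto simp: glue_R_def intro!: prod.cong)
    then show "(\<Prod>i\<in>{1..p - 1}. z i ^ j i) * z p ^ K * La_term (glue_R p K (a, q))
        = Rf_head p K a * Q_term (Suc p) q"
      using La_term_split[OF p1, of "glue_R p K (a, q)" a] Rf_head_eq[OF p2(1) z_nonzero, of a K] p
      by (auto simp: glue_R_def mult_ac)
  qed
  then show ?thesis by (simp add: Rf_eq_infsum_Rf_head R_piece_def infsum_cmult_right')
qed

lemma hybrid_sum_0: "hybrid_sum 0 = La N s (\<lambda>i. inverse (z i))"
proof -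
  have S: "{n\<in>lattice. shifted_head 0 n \<and> descending_tail 0 n} =
      {k. (\<forall>i\<in>{1..N}. 1 \<le> k i) \<and> (\<forall>i\<in>{1..<N}. k (i + 1) \<le> k i) \<and> (\<forall>i. i \<notin> {1..N} \<longrightarrow> k i = 0)}"
  proof (intro equalityI subsetI)
    fix n :: "nat \<Rightarrow> nat"
    assume n: "n \<in> {n\<in>lattice. shifted_head 0 n \<and> descending_tail 0 n}"
    then have "n (i + 1) \<le> n i" if "i \<in> {1..<N}" for i
      using descending_tailD[of 1 n i] that descending_tail_step[of 1 n] N by auto
    then show "n \<in> {k. (\<forall>i\<in>{1..N}. 1 \<le> k i) \<and> (\<forall>i\<in>{1..<N}. k (i + 1) \<le> k i) \<and> (\<forall>i. i \<notin> {1..N} \<longrightarrow> k i = 0)}"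
      using n lattice_memD by auto
  next
    fix n :: "nat \<Rightarrow> nat"
    assume n: "n \<in> {k. (\<forall>i\<in>{1..N}. 1 \<le> k i) \<and> (\<forall>i\<in>{1..<N}. k (i + 1) \<le> k i) \<and> (\<forall>i. i \<notin> {1..N} \<longrightarrow> k i = 0)}"
    have desc: "n i \<le> n (i - 1)" if "i \<in> {2..N}" for i
      using n that by (auto dest!: bspec[of _ _ "i - 1"])
    then have "n \<in> lattice" using n by (fastforce simp: lattice_def brick_idx_def)
    then show "n \<in> {n\<in>lattice. shifted_head 0 n \<and> descending_tail 0 n}"
      using desc by (auto simp: shifted_head_def descending_tail_def)
  qed
  show ?thesis
    unfolding hybrid_sum_def La_def S
    by (intro infsum_cong) (simp add: La_term_def power_inverse divide_inverse inverse_mult_distrib)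
qed

lemma hybrid_sum_N: "(\<Prod>i\<in>{1..N}. z i ^ j i) * hybrid_sum N = Brick N s m j z"
proof -
  have "hybrid_sum N = Q_piece (Suc N)"
    by (simp add: hybrid_sum_def Q_piece_def Q_region_def descending_tail_def)
  then show ?thesis using Q_piece_eq[of "Suc N"] by (simp add: Qf_empty_tail)
qed

lemma hybrid_sum_telescope:
  "hybrid_sum 0 - hybrid_sum N =
     (\<Sum>p\<in>{1..N}. Q_piece p)
     - (\<Sum>p\<in>{2..N}. of_int (eps (int (j (p - 1))) (int (j p + m p)))
          * (\<Sum>K\<in>{min (j (p - 1)) (j p + m p) + 1 .. max (j (p - 1)) (j p + m p)}. R_piece p K))"
proof -
  define c where "c p = (if 2 \<le> p then of_int (eps (int (j (p - 1))) (int (j p + m p))) else (0::complex))" for p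
  define R where "R p = (\<Sum>K\<in>{min (j (p - 1)) (j p + m p) + 1 .. max (j (p - 1)) (j p + m p)}. R_piece p K)"
    for p
  have "hybrid_sum 0 - hybrid_sum N = (\<Sum>p\<in>{1..N}. hybrid_sum (p - 1) - hybrid_sum p)"
    using sum_telescope''[of 0 N "\<lambda>p. - hybrid_sum p"] by (simp add: algebra_simps)
  also have "\<dots> = (\<Sum>p\<in>{1..N}. Q_piece p - c p * R p)"
    using hybrid_sum_step by (intro sum.cong) (auto simp: c_def R_def algebra_simps)
  also have "(\<Sum>p\<in>{1..N}. c p * R p) = (\<Sum>p\<in>{2..N}. c p * R p)"
    using N by (simp add: sum.atLeast_Suc_atMost c_def numeral_2_eq_2)
  then have "(\<Sum>p\<in>{1..N}. Q_piece p - c p * R p) = (\<Sum>p\<in>{1..N}. Q_piece p) - (\<Sum>p\<in>{2..N}. c p * R p)"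
    by (simp add: sum_subtractf)
  finally show ?thesis by (simp add: c_def R_def)
qed

theorem Brick_expansion:
  "Brick N s m j z =
     (\<Prod>i\<in>{1..N}. z i ^ j i) * La N s (\<lambda>i. inverse (z i))
     - (\<Sum>p\<in>{1..N}. (\<Prod>i\<in>{p..N}. z i ^ j i) * Qf N p s (j p) z * Brick (p - 1) s m j z)
     + (\<Sum>p\<in>{2..N}. of_int (eps (int (j (p - 1))) (int (j p + m p)))
          * (\<Prod>i\<in>{p..N}. z i ^ j i)
          * (\<Sum>k\<in>{min (j (p - 1)) (j p + m p) + 1 .. max (j (p - 1)) (j p + m p)}.
               inverse (z p ^ k) * Rf N p s m j z k))"
proof -
  define P where "P p = (\<Prod>i\<in>{p..N}. z i ^ j i)" for p
  define Ks where "Ks p = {min (j (p - 1)) (j p + m p) + 1 .. max (j (p - 1)) (j p + m p)}" for p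
  have P_split: "P 1 = (\<Prod>i\<in>{1..p - 1}. z i ^ j i) * P p" if "p \<in> {1..N}" for p
    unfolding P_def using that by (intro prod.atLeastAtMost_split_at) auto
  have Q: "P 1 * Q_piece p = P p * Qf N p s (j p) z * Brick (p - 1) s m j z" if p: "p \<in> {1..N}" for p
    using Q_piece_eq[of p] P_split[OF p] p by (simp add: mult_ac)
  have R: "P 1 * R_piece p K = P p * (inverse (z p ^ K) * Rf N p s m j z K)"
    if p: "p \<in> {2..N}" and K: "K \<in> Ks p" for p K
  proof -
    have "(\<Prod>i\<in>{1..p - 1}. z i ^ j i) * z p ^ K * R_piece p K = Rf N p s m j z K"
      using K by (intro R_piece_eq p) (simp add: Ks_def)
    then show ?thesis
      using P_split[of p] p z_nonzero[of p] by (auto simp: field_simps)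
  qed
  have "P 1 * hybrid_sum 0 - P 1 * hybrid_sum N
      = (\<Sum>p\<in>{1..N}. P 1 * Q_piece p)
        - (\<Sum>p\<in>{2..N}. of_int (eps (int (j (p - 1))) (int (j p + m p))) * (\<Sum>K\<in>Ks p. P 1 * R_piece p K))"
    using arg_cong[OF hybrid_sum_telescope, of "\<lambda>x. P 1 * x"]
    by (simp add: Ks_def right_diff_distrib sum_distrib_left mult_ac)
  also have "(\<Sum>p\<in>{1..N}. P 1 * Q_piece p) = (\<Sum>p\<in>{1..N}. P p * Qf N p s (j p) z * Brick (p - 1) s m j z)"
    by (intro sum.cong refl Q)
  also have "(\<Sum>p\<in>{2..N}. of_int (eps (int (j (p - 1))) (int (j p + m p))) * (\<Sum>K\<in>Ks p. P 1 * R_piece p K))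
      = (\<Sum>p\<in>{2..N}. of_int (eps (int (j (p - 1))) (int (j p + m p))) * P p
           * (\<Sum>K\<in>Ks p. inverse (z p ^ K) * Rf N p s m j z K))"
  proof (rule sum.cong[OF refl])
    fix p assume p: "p \<in> {2..N}"
    have "(\<Sum>K\<in>Ks p. P 1 * R_piece p K) = (\<Sum>K\<in>Ks p. P p * (inverse (z p ^ K) * Rf N p s m j z K))"
      by (intro sum.cong refl R[OF p])
    then show "of_int (eps (int (j (p - 1))) (int (j p + m p))) * (\<Sum>K\<in>Ks p. P 1 * R_piece p K)
        = of_int (eps (int (j (p - 1))) (int (j p + m p))) * P p
          * (\<Sum>K\<in>Ks p. inverse (z p ^ K) * Rf N p s m j z K)"
      by (simp add: sum_distrib_left mult_ac)
  qed
  finally show ?thesis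
    unfolding hybrid_sum_0 hybrid_sum_N[folded P_def] by (simp add: P_def Ks_def algebra_simps)
qed

end

section \<open>Reduction of \<open>R\<close> to bricks of lower depth\<close>

text \<open>In \<open>R\<^sub>N\<^sub>,\<^sub>p(K)\<close> the summation variable \<open>k\<^sub>p\<close> is tied to \<open>k\<^sub>p\<^sub>-\<^sub>1\<close>
  by \<open>k\<^sub>p = k\<^sub>p\<^sub>-\<^sub>1 + K\<close>, so merging the two positions gives a brick of depth \<open>N - 1\<close>
  with variable \<open>z\<^sub>p\<^sub>-\<^sub>1 z\<^sub>p\<close> and exponent \<open>e\<close> at position \<open>p - 1\<close>, modulation \<open>K\<close> at
  position \<open>p\<close>, and the remaining variables shifted down by one; \<open>merged_vars p i\<close> is the set of
  indices \<open>l\<close> with \<open>w\<^sub>i = \<Prod> z\<^sub>l\<close>.\<close>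

definition merged_exps :: "nat \<Rightarrow> (nat \<Rightarrow> int) \<Rightarrow> int \<Rightarrow> nat \<Rightarrow> int" where
  "merged_exps p s e i = (if i < p - 1 then s i else if i = p - 1 then e else s (i + 1))"

definition merged_mods :: "nat \<Rightarrow> (nat \<Rightarrow> nat) \<Rightarrow> nat \<Rightarrow> nat \<Rightarrow> nat" where
  "merged_mods p m K i = (if i < p then m i else if i = p then K else 0)"

definition merged_shifts :: "nat \<Rightarrow> (nat \<Rightarrow> nat) \<Rightarrow> nat \<Rightarrow> nat \<Rightarrow> nat" where
  "merged_shifts p j sh i = (if i < p - 1 then j i else if i = p - 1 then sh else 0)"

definition merged_vars :: "nat \<Rightarrow> nat \<Rightarrow> nat set" where
  "merged_vars p i = (if i < p - 1 then {i} else if i = p - 1 then {p - 1, p} else {i + 1})"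

lemma merged_exps_weight_le:
  assumes p: "p \<in> {2..N}" and e: "max e 0 \<le> max (s (p - 1)) 0 + max (s p) 0"
  shows "(\<Sum>i\<in>{1..N - 1}. max (merged_exps p s e i) 0) \<le> (\<Sum>i\<in>{1..N}. max (s i) 0)"
proof -
  have p2: "2 \<le> p" "p \<le> N" using p by auto
  define g where "g i = max (s i) 0" for i
  define g' where "g' i = max (merged_exps p s e i) 0" for i
  have "(\<Sum>i\<in>{1..N - 1}. g' i) = (\<Sum>i\<in>{1..p - 1}. g' i) + (\<Sum>i\<in>{p..N - 1}. g' i)"
    by (rule sum.atLeastAtMost_split_at) (use p2 in auto)
  also have "(\<Sum>i\<in>{1..p - 1}. g' i) = (\<Sum>i\<in>{1..p - 2}. g i) + max e 0"
    unfolding sum.atLeastAtMost_last[OF p2(1)]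
    by (rule arg_cong2[where f = "(+)"], rule sum.cong) (auto simp: g_def g'_def merged_exps_def)
  also have "(\<Sum>i\<in>{p..N - 1}. g' i) = (\<Sum>i\<in>{p..N - 1}. g (Suc i))"
    by (rule sum.cong) (use p2 in \<open>auto simp: g_def g'_def merged_exps_def\<close>)
  also have "\<dots> = (\<Sum>i\<in>{Suc p..N}. g i)"
    using sum.shift_bounds_cl_Suc_ivl[of g p "N - 1"] p2 by simp
  also have "(\<Sum>i\<in>{1..p - 2}. g i) + max e 0 + (\<Sum>i\<in>{Suc p..N}. g i)
      \<le> (\<Sum>i\<in>{1..p - 2}. g i) + g (p - 1) + (g p + (\<Sum>i\<in>{Suc p..N}. g i))"
    using e by (simp add: g_def)
  also have "\<dots> = (\<Sum>i\<in>{1..N}. g i)"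
    using sum.atLeastAtMost_split_at[of p N g] sum.atLeastAtMost_last[OF p2(1), of g]
      sum.atLeast_Suc_atMost[OF p2(2), of g] p2 by simp
  finally show ?thesis by (simp add: g_def g'_def)
qed

context brick_domain
begin

definition merged_w :: "nat \<Rightarrow> nat \<Rightarrow> complex" where
  "merged_w p i = (\<Prod>l\<in>merged_vars p i. z l)"

lemma merged_w_eq:
  assumes "2 \<le> p"
  shows "merged_w p i = (if i < p - 1 then z i else if i = p - 1 then z (p - 1) * z p else z (i + 1))"
  using assms by (simp add: merged_w_def merged_vars_def)

lemma norm_merged_w_ge_1:
  assumes "p \<in> {2..N}" "i \<in> {1..N - 1}"
  shows "1 \<le> cmod (merged_w p i)"
proof -
  have "merged_vars p i \<subseteq> {1..N}" using assms by (auto simp: merged_vars_def)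
  then show ?thesis
    unfolding merged_w_def prod_norm[symmetric] using norm_z_ge_1 by (intro prod_ge_1) auto
qed

lemma norm_merged_w_1:
  assumes p: "p \<in> {2..N}"
  shows "1 < cmod (merged_w p 1)"
proof (cases "p = 2")
  case True
  then have "cmod (merged_w p 1) = cmod (z 1) * cmod (z 2)"
    by (simp add: merged_w_def merged_vars_def norm_mult)
  moreover have "1 < cmod (z 1)" "1 \<le> cmod (z 2)" using z p True by (auto simp: zdom_def)
  ultimately show ?thesis by (metis less_le_trans mult_le_cancel_left1 norm_ge_zero not_le)
next
  case False
  then have "1 < p - 1" using p by auto
  then show ?thesis using z by (simp add: merged_w_def merged_vars_def zdom_def)
qed

definition merged_term :: "nat \<Rightarrow> nat \<Rightarrow> int \<Rightarrow> (nat \<Rightarrow> nat) \<Rightarrow> complex" where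
  "merged_term p sh e k = (\<Prod>i\<in>{1..N - 1}.
     inverse (merged_w p i ^ k i * of_nat (k i + merged_shifts p j sh i) powi merged_exps p s e i))"

lemma merged_term_summable:
  assumes "p \<in> {2..N}"
  shows "merged_term p sh e summable_on brick_idx (N - 1) (merged_mods p m K)"
  unfolding merged_term_def[abs_def]
  by (rule brick_summable) (use assms norm_merged_w_1 norm_merged_w_ge_1 in auto)

definition R_term :: "nat \<Rightarrow> nat \<Rightarrow> (nat \<Rightarrow> nat) \<Rightarrow> complex" where
  "R_term p K k = merged_term p (j (p - 1)) (s (p - 1)) k * inverse (of_nat (k (p - 1) + K) powi s p)"

lemma R_term_partial_fractions:
  assumes p: "p \<in> {2..N}" and L: "partial_fraction_expansion (j (p - 1)) K (s (p - 1)) (s p) L"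
    and k: "k \<in> brick_idx (N - 1) (merged_mods p m K)"
  shows "R_term p K k = (\<Sum>(c, sh, e)\<leftarrow>L. of_rat c * merged_term p sh e k)"
proof -
  have pm: "p - 1 \<in> {1..N - 1}" using p by auto
  then have k1: "1 \<le> k (p - 1)" using k by (simp add: brick_idx_def)
  define rest where "rest = (\<Prod>i\<in>{1..N - 1} - {p - 1}.
    inverse (merged_w p i ^ k i * of_nat (k i + merged_shifts p j 0 i) powi merged_exps p s 0 i))"
  define W where "W = inverse (merged_w p (p - 1) ^ k (p - 1))"
  define x :: complex where "x = of_nat (k (p - 1))"
  have split: "merged_term p sh e k = W * inverse ((x + of_nat sh) powi e) * rest" for sh e
  proof -
    have "merged_shifts p j sh i = merged_shifts p j 0 i" "merged_exps p s e i = merged_exps p s 0 i"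
      if "i \<noteq> p - 1" for i
      using that by (simp_all add: merged_shifts_def merged_exps_def)
    with pm show ?thesis
      unfolding merged_term_def rest_def W_def x_def
      by (simp add: prod.remove inverse_mult_distrib merged_shifts_def merged_exps_def mult.assoc)
  qed
  have "x + of_nat a \<noteq> 0" for a using k1 by (simp add: x_def flip: of_nat_add)
  then have "inverse ((x + of_nat (j (p - 1))) powi s (p - 1) * (x + of_nat K) powi s p)
      = (\<Sum>(c, sh, e)\<leftarrow>L. of_rat c * inverse ((x + of_nat sh) powi e))"
    using L by (simp add: partial_fraction_expansion_def)
  then have "W * inverse ((x + of_nat (j (p - 1))) powi s (p - 1) * (x + of_nat K) powi s p) * rest
      = (\<Sum>(c, sh, e)\<leftarrow>L. of_rat c * (W * inverse ((x + of_nat sh) powi e) * rest))"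
    by (simp add: sum_list_const_mult case_prod_unfold mult_ac flip: sum_list_mult_const)
  then show ?thesis
    by (simp add: R_term_def split x_def inverse_mult_distrib mult_ac)
qed

lemma R_term_summable:
  assumes p: "p \<in> {2..N}"
  shows "R_term p K summable_on brick_idx (N - 1) (merged_mods p m K)"
proof -
  obtain L where L: "partial_fraction_expansion (j (p - 1)) K (s (p - 1)) (s p) L"
    using partial_fraction_expansion_exists by blast
  have "(\<lambda>k. \<Sum>(c, sh, e)\<leftarrow>L. of_rat c * merged_term p sh e k) summable_on brick_idx (N - 1) (merged_mods p m K)"
    using infsum_sum_list[of L "\<lambda>(c, sh, e) k. of_rat c * merged_term p sh e k"
        "brick_idx (N - 1) (merged_mods p m K)"]
      merged_term_summable[OF p] by (auto simp: case_prod_unfold intro: summable_on_cmult_right)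
  then show ?thesis
    by (rule summable_on_cong[THEN iffD2, rotated]) (rule R_term_partial_fractions[OF p L])
qed

definition glue_merged :: "nat \<Rightarrow> (nat \<Rightarrow> nat) \<times> (nat \<Rightarrow> nat) \<Rightarrow> nat \<Rightarrow> nat" where
  "glue_merged p = (\<lambda>(a, q) i. if i \<le> p - 1 then a i else q (i + 1))"

definition cut_merged :: "nat \<Rightarrow> (nat \<Rightarrow> nat) \<Rightarrow> (nat \<Rightarrow> nat) \<times> (nat \<Rightarrow> nat)" where
  "cut_merged p k = ((\<lambda>i. if i \<le> p - 1 then k i else 0), (\<lambda>i. if i \<in> {Suc p..N} then k (i - 1) else 0))"

lemma glue_merged_mem:
  assumes p: "p \<in> {2..N}" and a: "a \<in> brick_idx (p - 1) m" and q: "q \<in> Q_idx N (Suc p) (a (p - 1) + K)"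
  shows "glue_merged p (a, q) \<in> brick_idx (N - 1) (merged_mods p m K)"
    and "cut_merged p (glue_merged p (a, q)) = (a, q)"
proof -
  have p2: "2 \<le> p" "p \<le> N" using p by auto
  have glue_merged_apply: "glue_merged p (a, q) i = (if i \<le> p - 1 then a i else q (i + 1))" for i
    by (simp add: glue_merged_def)
  have a0: "\<And>i. i \<notin> {1..p - 1} \<Longrightarrow> a i = 0" and a1: "\<And>i. i \<in> {1..p - 1} \<Longrightarrow> 1 \<le> a i"
    and a2: "\<And>i. i \<in> {2..p - 1} \<Longrightarrow> a i \<le> a (i - 1) + m i"
    using a by (auto simp: brick_idx_def)
  have q_first: "p + 1 \<le> N \<Longrightarrow> q (p + 1) \<le> a (p - 1) + K"
    and q1: "\<And>i. i \<in> {Suc p..N} \<Longrightarrow> 1 \<le> q i"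
    and q2: "\<And>i. i \<in> {Suc p..<N} \<Longrightarrow> q (i + 1) \<le> q i"
    and q0: "\<And>i. i \<notin> {Suc p..N} \<Longrightarrow> q i = 0"
    using q by (auto simp: Q_idx_def)
  show "glue_merged p (a, q) \<in> brick_idx (N - 1) (merged_mods p m K)" unfolding brick_idx_def
  proof (intro CollectI conjI ballI allI impI)
    fix i assume i: "i \<in> {1..N - 1}"
    show "1 \<le> glue_merged p (a, q) i"
    proof (cases "i \<le> p - 1")
      case False
      then have "i + 1 \<in> {Suc p..N}" using i p2 by auto
      then show ?thesis using q1[of "i + 1"] False by (simp add: glue_merged_apply)
    qed (use a1 i in \<open>auto simp: glue_merged_apply\<close>)
  next
    fix i assume i: "i \<in> {2..N - 1}"
    consider "i \<le> p - 1" | "i = p" | "p < i" by linarith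
    then show "glue_merged p (a, q) i \<le> glue_merged p (a, q) (i - 1) + merged_mods p m K i"
    proof cases
      case 1 then show ?thesis using a2[of i] i by (auto simp: glue_merged_apply merged_mods_def)
    next
      case 2 then show ?thesis using q_first i p2 by (auto simp: glue_merged_apply merged_mods_def)
    next
      case 3 then show ?thesis using q2[of i] i by (auto simp: glue_merged_apply merged_mods_def)
    qed
  next
    fix i assume i: "i \<notin> {1..N - 1}"
    show "glue_merged p (a, q) i = 0"
    proof (cases "i = 0")
      case False
      then have "p - 1 < i" "i + 1 \<notin> {Suc p..N}" using i p2 by auto
      then show ?thesis using q0[of "i + 1"] by (simp add: glue_merged_apply)
    qed (use a0[of 0] in \<open>simp add: glue_merged_apply\<close>)
  qed
  show "cut_merged p (glue_merged p (a, q)) = (a, q)"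
    using a0 q0 p2 by (auto simp: cut_merged_def glue_merged_apply fun_eq_iff)
qed

lemma cut_merged_mem:
  assumes p: "p \<in> {2..N}" and k: "k \<in> brick_idx (N - 1) (merged_mods p m K)"
  shows "cut_merged p k \<in> Sigma (brick_idx (p - 1) m) (\<lambda>a. Q_idx N (Suc p) (a (p - 1) + K))"
    and "glue_merged p (cut_merged p k) = k"
proof -
  have p2: "2 \<le> p" "p \<le> N" using p by auto
  have k0: "\<And>i. i \<notin> {1..N - 1} \<Longrightarrow> k i = 0" and k1: "\<And>i. i \<in> {1..N - 1} \<Longrightarrow> 1 \<le> k i"
    and k2: "\<And>i. i \<in> {2..N - 1} \<Longrightarrow> k i \<le> k (i - 1) + merged_mods p m K i"
    using k by (auto simp: brick_idx_def)
  have "fst (cut_merged p k) \<in> brick_idx (p - 1) m" unfolding brick_idx_def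
  proof (intro CollectI conjI ballI allI impI)
    fix i assume "i \<in> {1..p - 1}"
    then show "1 \<le> fst (cut_merged p k) i" using k1[of i] p2 by (auto simp: cut_merged_def)
  next
    fix i assume i: "i \<in> {2..p - 1}"
    then have "i \<in> {2..N - 1}" "i < p" using p2 by auto
    then show "fst (cut_merged p k) i \<le> fst (cut_merged p k) (i - 1) + m i"
      using k2[of i] i by (auto simp: cut_merged_def merged_mods_def)
  next
    fix i assume "i \<notin> {1..p - 1}"
    then show "fst (cut_merged p k) i = 0" using k0[of 0] by (cases "i = 0") (auto simp: cut_merged_def)
  qed
  moreover have "snd (cut_merged p k) \<in> Q_idx N (Suc p) (fst (cut_merged p k) (p - 1) + K)" unfolding Q_idx_def
  proof (intro CollectI conjI ballI allI impI)
    assume "Suc p \<le> N"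
    then have "p \<in> {2..N - 1}" using p2 by auto
    then show "snd (cut_merged p k) (Suc p) \<le> fst (cut_merged p k) (p - 1) + K"
      using k2[of p] by (simp add: cut_merged_def merged_mods_def)
  next
    fix i assume "i \<in> {Suc p..N}"
    then have "i - 1 \<in> {1..N - 1}" using p2 by auto
    then show "1 \<le> snd (cut_merged p k) i" using k1[of "i - 1"] \<open>i \<in> {Suc p..N}\<close> by (simp add: cut_merged_def)
  next
    fix i assume i: "i \<in> {Suc p..<N}"
    then have "i \<in> {2..N - 1}" "\<not> i < p" "i \<noteq> p" using p2 by auto
    then show "snd (cut_merged p k) (i + 1) \<le> snd (cut_merged p k) i"
      using k2[of i] i by (simp add: cut_merged_def merged_mods_def)
  qed (auto simp: cut_merged_def)
  ultimately show "cut_merged p k \<in> Sigma (brick_idx (p - 1) m) (\<lambda>a. Q_idx N (Suc p) (a (p - 1) + K))" by (metis SigmaI prod.collapse)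
  show "glue_merged p (cut_merged p k) = k"
    using k0 p2 by (auto simp: glue_merged_def cut_merged_def fun_eq_iff)
qed

lemma bij_betw_glue_merged:
  assumes p: "p \<in> {2..N}"
  shows "bij_betw (glue_merged p) (Sigma (brick_idx (p - 1) m) (\<lambda>a. Q_idx N (Suc p) (a (p - 1) + K)))
           (brick_idx (N - 1) (merged_mods p m K))"
proof (rule bij_betw_byWitness[where f' = "cut_merged p"])
  show "\<forall>x\<in>Sigma (brick_idx (p - 1) m) (\<lambda>a. Q_idx N (Suc p) (a (p - 1) + K)). cut_merged p (glue_merged p x) = x"
    using glue_merged_mem(2)[OF p] by auto
  show "glue_merged p ` Sigma (brick_idx (p - 1) m) (\<lambda>a. Q_idx N (Suc p) (a (p - 1) + K))
      \<subseteq> brick_idx (N - 1) (merged_mods p m K)"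
    using glue_merged_mem(1)[OF p] by auto
qed (use cut_merged_mem[OF p] in blast)+

lemma R_term_glue_merged:
  assumes p: "p \<in> {2..N}"
  shows "R_term p K (glue_merged p (a, q)) = Rf_head p K a * Q_term (Suc p) q"
proof -
  have p2: "2 \<le> p" "p \<le> N" using p by auto
  define T where "T i = inverse (merged_w p i ^ glue_merged p (a, q) i
      * of_nat (glue_merged p (a, q) i + merged_shifts p j (j (p - 1)) i) powi merged_exps p s (s (p - 1)) i)" for i
  define X where "X i = (of_nat (a i + j i) :: complex) powi s i" for i
  have "merged_term p (j (p - 1)) (s (p - 1)) (glue_merged p (a, q)) = (\<Prod>i\<in>{1..p - 1}. T i) * (\<Prod>i\<in>{p..N - 1}. T i)"
    unfolding merged_term_def T_def by (rule prod.atLeastAtMost_split_at) (use p2 in auto)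
  also have "(\<Prod>i\<in>{1..p - 1}. T i) = (\<Prod>i\<in>{1..p - 2}. T i) * T (p - 1)"
    by (rule prod.atLeastAtMost_last[OF p2(1)])
  also have "(\<Prod>i\<in>{1..p - 2}. T i) = (\<Prod>i\<in>{1..p - 2}. inverse (z i ^ a i * X i))"
    by (rule prod.cong) (use p2 in \<open>auto simp: T_def X_def glue_merged_def merged_w_eq merged_shifts_def merged_exps_def\<close>)
  also have "T (p - 1) = inverse ((z (p - 1) * z p) ^ a (p - 1) * X (p - 1))"
    using p2 by (simp add: T_def X_def glue_merged_def merged_w_eq merged_shifts_def merged_exps_def)
  also have "(\<Prod>i\<in>{p..N - 1}. T i) = (\<Prod>i\<in>{p..N - 1}. inverse (z (Suc i) ^ q (Suc i) * of_nat (q (Suc i)) powi s (Suc i)))"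
    by (rule prod.cong) (use p2 in \<open>auto simp: T_def glue_merged_def merged_w_eq merged_shifts_def merged_exps_def\<close>)
  also have "\<dots> = (\<Prod>i\<in>{Suc p..N}. inverse (z i ^ q i * of_nat (q i) powi s i))"
    using prod.shift_bounds_cl_Suc_ivl[of "\<lambda>i. inverse (z i ^ q i * of_nat (q i) powi s i)" p "N - 1"] p2
    by simp
  finally have "merged_term p (j (p - 1)) (s (p - 1)) (glue_merged p (a, q))
      = (\<Prod>i\<in>{1..p - 2}. inverse (z i ^ a i * X i)) * inverse ((z (p - 1) * z p) ^ a (p - 1) * X (p - 1))
        * (\<Prod>i\<in>{Suc p..N}. inverse (z i ^ q i * of_nat (q i) powi s i))" .
  moreover have "(\<Prod>i\<in>{1..p - 1}. X i) = (\<Prod>i\<in>{1..p - 2}. X i) * X (p - 1)"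
    by (rule prod.atLeastAtMost_last[OF p2(1)])
  moreover have "glue_merged p (a, q) (p - 1) = a (p - 1)" by (simp add: glue_merged_def)
  ultimately show ?thesis
    unfolding R_term_def Rf_head_def Q_term_def X_def
    by (simp add: prod.distrib inverse_mult_distrib prod_inversef[symmetric] comp_def mult_ac)
qed

lemma Rf_eq_infsum_R_term:
  assumes p: "p \<in> {2..N}"
  shows "Rf N p s m j z K = infsum (R_term p K) (brick_idx (N - 1) (merged_mods p m K))"
  unfolding Rf_eq_infsum_Rf_head
  by (rule infsum_Sigma_reindex[OF bij_betw_glue_merged[OF p] _ _ R_term_summable[OF p]])
    (simp_all add: finite_Q_idx R_term_glue_merged[OF p])

lemma Rf_eq_sum_merged_bricks:
  assumes p: "p \<in> {2..N}" and L: "partial_fraction_expansion (j (p - 1)) K (s (p - 1)) (s p) L"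
  shows "Rf N p s m j z K = (\<Sum>(c, sh, e)\<leftarrow>L.
           of_rat c * Brick (N - 1) (merged_exps p s e) (merged_mods p m K) (merged_shifts p j sh) (merged_w p))"
proof -
  define C where "C = brick_idx (N - 1) (merged_mods p m K)"
  have "Rf N p s m j z K = (\<Sum>\<^sub>\<infinity>k\<in>C. \<Sum>(c, sh, e)\<leftarrow>L. of_rat c * merged_term p sh e k)"
    unfolding Rf_eq_infsum_R_term[OF p] C_def
    by (intro infsum_cong R_term_partial_fractions[OF p L])
  also have "\<dots> = (\<Sum>(c, sh, e)\<leftarrow>L. of_rat c * infsum (merged_term p sh e) C)"
    using infsum_sum_list[of L "\<lambda>(c, sh, e) k. of_rat c * merged_term p sh e k" C]
      merged_term_summable[OF p]
    by (auto simp: C_def case_prod_unfold infsum_cmult_right' intro: summable_on_cmult_right)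
  finally show ?thesis by (simp add: Brick_def merged_term_def[abs_def] C_def)
qed

end

lemma Rf_term_repr:
  assumes N: "1 \<le> N" and m1: "m 1 = 0" and p: "p \<in> {2..N}"
  shows "\<exists>T. is_term_repr N (\<Sum>i\<in>{1..N}. max (s i) 0) T (\<lambda>z. Rf N p s m j z K)"
proof -
  obtain L where L: "partial_fraction_expansion (j (p - 1)) K (s (p - 1)) (s p) L"
    using partial_fraction_expansion_exists by blast
  define T :: bterm where "T = map (\<lambda>(c, sh, e). ([(c, \<lambda>_. 0)],
      (N - 1, merged_exps p s e, merged_mods p m K, merged_shifts p j sh, merged_vars p))) L"
  have "bd_ok N (N - 1, merged_exps p s e, merged_mods p m K, merged_shifts p j sh, merged_vars p)
      \<and> bd_weight (N - 1, merged_exps p s e, merged_mods p m K, merged_shifts p j sh, merged_vars p)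
          \<le> (\<Sum>i\<in>{1..N}. max (s i) 0)"
    if "(c, sh, e) \<in> set L" for c sh e
  proof -
    have "max e 0 \<le> max (s (p - 1)) 0 + max (s p) 0"
      using L that by (fastforce simp: partial_fraction_expansion_def)
    then show ?thesis
      using merged_exps_weight_le[OF p] p m1
      by (auto simp: bd_ok_def bd_weight_def merged_mods_def merged_vars_def)
  qed
  then have "\<forall>(c, b)\<in>set T. bd_ok N b \<and> bd_weight b \<le> (\<Sum>i\<in>{1..N}. max (s i) 0)"
    by (auto simp: T_def)
  moreover have "(\<forall>(c, b)\<in>set T. bd_defined b z) \<and> Rf N p s m j z K = term_eval N T z"
    if z: "z \<in> zdom N" for z
  proof -
    interpret brick_domain N s m j z using N z by unfold_locales
    have w: "(\<lambda>i. \<Prod>l\<in>merged_vars p i. z l) = merged_w p" by (simp add: merged_w_def[abs_def])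
    have "bd_defined b z" if "(c, b) \<in> set T" for c b
      using that norm_merged_w_1[OF p] norm_merged_w_ge_1[OF p]
      by (auto simp: T_def bd_defined_def bd_vars_def merged_w_def)
    moreover have "term_eval N T z = (\<Sum>(c, sh, e)\<leftarrow>L. of_rat c * Brick (N - 1) (merged_exps p s e)
        (merged_mods p m K) (merged_shifts p j sh) (merged_w p))"
      unfolding T_def
      by (induction L) (auto simp: term_eval_def lp_eval_def bd_eval_def bd_vars_def w)
    ultimately show ?thesis using Rf_eq_sum_merged_bricks[OF p L] by auto
  qed
  ultimately show ?thesis unfolding is_term_repr_def by blast
qed

theorem mainTheorem5:
  fixes N :: nat and s :: "nat \<Rightarrow> int" and m j :: "nat \<Rightarrow> nat"
  assumes "N \<ge> 1" and "m 1 = 0"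
  shows "(\<forall>z\<in>zdom N.
            Brick N s m j z =
              (\<Prod>i\<in>{1..N}. z i ^ j i) * La N s (\<lambda>i. inverse (z i))
              - (\<Sum>p\<in>{1..N}. (\<Prod>i\<in>{p..N}. z i ^ j i) * Qf N p s (j p) z * Brick (p - 1) s m j z)
              + (\<Sum>p\<in>{2..N}. of_int (eps (int (j (p - 1))) (int (j p + m p)))
                   * (\<Prod>i\<in>{p..N}. z i ^ j i)
                   * (\<Sum>k\<in>{min (j (p - 1)) (j p + m p) + 1 .. max (j (p - 1)) (j p + m p)}.
                        inverse (z p ^ k) * Rf N p s m j z k)))
       \<and> (\<forall>p\<in>{2..N}. \<forall>K::nat. \<exists>T. is_term_repr N (\<Sum>i\<in>{1..N}. max (s i) 0) T
                                        (\<lambda>z. Rf N p s m j z K))"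
  using assms
  by (intro conjI ballI allI brick_domain.Brick_expansion Rf_term_repr) (auto simp: brick_domain_def)

end
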